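(* Let $A>0$, $\alpha>0$ and $k\ge1$, and let $S_k$ be the disjoint union of $k$ equal squares of total area $A$. Then \[ \frac{4\alpha\pi^2k}{A^{1/2}(\pi^2k^{1/2}+2\alpha A^{1/2})}\le\lambda_k(S_k,\alpha)\le\frac{\pi^2k^{1/2}}{(\pi^2-8)A}\Big[\pi^2k^{1/2}+2\alpha A^{1/2}-\sqrt{64\alpha k^{1/2}A^{1/2}+(\pi^2k^{1/2}-2\alpha A^{1/2})^2}\Big]. \]
   Context: For a bounded open set $\Omega\subset\mathbb{R}^2$ with Lipschitz boundary (possibly disconnected) and $\alpha>0$, $\lambda_1(\Omega,\alpha)\le\lambda_2(\Omega,\alpha)\le\cdots$ denote the eigenvalues, counted with multiplicity, of the Robin Laplacian $-\Delta u=\lambda u$, $\partial_\nu u+\alpha u=0$ on $\partial\Omega$ (defined via the form $\int_\Omega\nabla u\cdot\overline{\nabla v}+\alpha\int_{\partial\Omega}u\overline v$ on $H^1(\Omega)$). Each square of $S_k$ has side length $(A/k)^{1/2}$. *)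

theory Defs
  imports "HOL-Analysis.Analysis"
begin

type_synonym pt = "real \<times> real"

text \<open>Admissible test functions: real-valued C1 functions on the plane (restricted to the domain
  they are dense in H1 of a Lipschitz domain).\<close>
definition C1_fun :: "(pt \<Rightarrow> real) \<Rightarrow> bool" where
  "C1_fun u \<longleftrightarrow> u differentiable_on UNIV \<and>
     continuous_on UNIV (\<lambda>x. frechet_derivative u (at x) (1,0)) \<and>
     continuous_on UNIV (\<lambda>x. frechet_derivative u (at x) (0,1))"

definition dirichlet :: "pt set \<Rightarrow> (pt \<Rightarrow> real) \<Rightarrow> real" where
  "dirichlet \<Omega> u = integral \<Omega> (\<lambda>x. (frechet_derivative u (at x) (1,0))\<^sup>2
                                   + (frechet_derivative u (at x) (0,1))\<^sup>2)"

text \<open>Robin Rayleigh quotient; bint is the boundary integral (w.r.t. arc length) functional.\<close>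
definition robin_rayleigh ::
    "pt set \<Rightarrow> ((pt \<Rightarrow> real) \<Rightarrow> real) \<Rightarrow> real \<Rightarrow> (pt \<Rightarrow> real) \<Rightarrow> real" where
  "robin_rayleigh \<Omega> bint \<alpha> v =
     (dirichlet \<Omega> v + \<alpha> * bint (\<lambda>x. (v x)\<^sup>2)) / integral \<Omega> (\<lambda>x. (v x)\<^sup>2)"

text \<open>k-th Robin eigenvalue (counted with multiplicity) via the min-max principle:
  infimum over k-dimensional subspaces (spanned by u_0..u_{k-1}, linearly independent in L2 of
  the domain) of the maximum of the Rayleigh quotient.\<close>
definition robin_eig ::
    "pt set \<Rightarrow> ((pt \<Rightarrow> real) \<Rightarrow> real) \<Rightarrow> real \<Rightarrow> nat \<Rightarrow> real" where
  "robin_eig \<Omega> bint \<alpha> k =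
     Inf { Sup { robin_rayleigh \<Omega> bint \<alpha> (\<lambda>x. \<Sum>i<k. c i * u i x) | c. \<exists>i<k. c i \<noteq> 0 }
         | u. (\<forall>i<k. C1_fun (u i)) \<and>
              (\<forall>c. integral \<Omega> (\<lambda>x. (\<Sum>i<k. c i * u i x)\<^sup>2) = 0 \<longrightarrow> (\<forall>i<k. c i = 0)) }"

text \<open>The i-th open square of side s, placed at [2 i s, 2 i s + s] x [0, s] (closures disjoint).\<close>
definition sq_cell :: "real \<Rightarrow> nat \<Rightarrow> pt set" where
  "sq_cell s i = {(x,y). 2 * real i * s < x \<and> x < 2 * real i * s + s \<and> 0 < y \<and> y < s}"

definition sq_side :: "real \<Rightarrow> nat \<Rightarrow> real" where
  "sq_side A k = sqrt (A / real k)"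

definition S_union :: "real \<Rightarrow> nat \<Rightarrow> pt set" where
  "S_union A k = (\<Union>i<k. sq_cell (sq_side A k) i)"

definition S_bint :: "real \<Rightarrow> nat \<Rightarrow> (pt \<Rightarrow> real) \<Rightarrow> real" where
  "S_bint A k g = (let s = sq_side A k in
     \<Sum>i<k. let a = 2 * real i * s in
       integral {0..s} (\<lambda>t. g (a + t, 0) + g (a + t, s) + g (a, t) + g (a + s, t)))"

definition robin_eig_S :: "real \<Rightarrow> nat \<Rightarrow> real \<Rightarrow> nat \<Rightarrow> real" where
  "robin_eig_S A k \<alpha> n = robin_eig (S_union A k) (S_bint A k) \<alpha> n"

end

theory Submission
  imports Defs
begin

text \<open>All estimates reduce to an interval of length \<open>s = sqrt (A / k)\<close>, the side of the squares.

  Lower bound: \<open>\<psi> t = - sqrt m tan (sqrt m (t - s/2))\<close> solves the Riccati equation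
  \<open>\<psi>' = -(m + \<psi>\<^sup>2)\<close> on \<open>[0, s]\<close>, and integrating \<open>(\<psi> g\<^sup>2)' + m g\<^sup>2 \<le> g'\<^sup>2\<close> gives
  \<open>m \<integral> g\<^sup>2 \<le> \<integral> g'\<^sup>2 + \<alpha> (g(0)\<^sup>2 + g(s)\<^sup>2)\<close> once \<open>\<psi>(0) \<le> \<alpha>\<close>; by the Becker--Stark inequality this
  holds for \<open>m = 2 \<alpha> pi\<^sup>2 / (s (pi\<^sup>2 + 2 \<alpha> s))\<close>. Applied along both coordinate directions of every
  square, it bounds the Rayleigh quotient of every \<open>C\<^sup>1\<close> function on \<open>S_k\<close> from below by \<open>2 m\<close>.

  Upper bound: let \<open>f = a + b sin (pi t / s)\<close> realise the smaller eigenvalue \<open>\<mu>\<close> of the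
  one-dimensional Robin form on the span of \<open>1\<close> and \<open>sin (pi t / s)\<close>. The \<open>k\<close> functions equal to
  \<open>f(x - 2 j s) f(y)\<close> on the \<open>j\<close>-th square and to \<open>0\<close> on the others (glued by \<open>C\<^sup>1\<close> cut-offs)
  span a \<open>k\<close>-dimensional space on which the Rayleigh quotient is constantly \<open>2 \<mu>\<close>.\<close>

lemma has_real_derivative_imp_continuous_on:
  "(\<And>x. (f has_real_derivative f' x) (at x)) \<Longrightarrow> continuous_on UNIV f"
  by (meson DERIV_isCont continuous_at_imp_continuous_on)

lemma continuous_on_UNIV_comp:
  "continuous_on UNIV f \<Longrightarrow> continuous_on UNIV g \<Longrightarrow> continuous_on UNIV (\<lambda>x. f (g x))"
  by (rule continuous_on_compose2) auto

lemma continuous_on_slices: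
  fixes f :: "pt \<Rightarrow> real"
  assumes "continuous_on UNIV f"
  shows "continuous_on UNIV (\<lambda>t. f (t, y))" and "continuous_on UNIV (\<lambda>t. f (x, t))"
    and "continuous_on UNIV (\<lambda>t. f (x + t, y))"
  by (rule continuous_on_compose2[OF assms]; auto intro!: continuous_intros)+

lemma integrable_if_continuous_on_UNIV:
  fixes f :: "'a::euclidean_space \<Rightarrow> real" and g :: "real \<Rightarrow> real"
  shows "continuous_on UNIV f \<Longrightarrow> f integrable_on cbox a b"
    and "continuous_on UNIV g \<Longrightarrow> g integrable_on {c..d}"
  by (auto intro: integrable_continuous integrable_continuous_interval continuous_on_subset)

lemma integral_eq_antiderivative:
  fixes F f :: "real \<Rightarrow> real"
  assumes "a \<le> b" "\<And>t. (F has_real_derivative f t) (at t)"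
  shows "integral {a..b} f = F b - F a"
  using assms
  by (intro integral_unique fundamental_theorem_of_calculus)
    (auto simp: has_real_derivative_iff_has_vector_derivative[symmetric] intro: has_field_derivative_at_within)

section \<open>The Becker--Stark inequality\<close>

lemma pi_squared_gt_8: "pi\<^sup>2 > (8::real)"
proof -
  have "pi * pi > 3 * 3" using pi_gt3 by (intro mult_strict_mono) auto
  then show ?thesis by (simp add: power2_eq_square)
qed

lemma tan_div_self_mono:
  fixes z y :: real
  assumes "0 < z" "z \<le> y" "y < pi/2"
  shows "tan z / z \<le> tan y / y"
proof (rule DERIV_nonneg_imp_nondecreasing[OF assms(2)])
  fix t assume t: "z \<le> t" "t \<le> y"
  have tpos: "0 < t" and c: "cos t > 0" using t assms by (auto intro!: cos_gt_zero_pi)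
  have s: "sin t \<ge> 0" using t assms by (intro sin_ge_zero) auto
  have d: "((\<lambda>t. tan t / t) has_real_derivative (inverse ((cos t)\<^sup>2) * t - tan t) / t\<^sup>2) (at t)"
    using c tpos by (auto intro!: derivative_eq_intros simp: power2_eq_square)
  have "sin t * cos t \<le> sin t" using s cos_le_one[of t] by (simp add: mult_left_le)
  also have "\<dots> \<le> t" using sin_x_le_x tpos by simp
  finally have "sin t * cos t \<le> t" .
  then have "tan t \<le> inverse ((cos t)\<^sup>2) * t"
    using c by (simp add: tan_def field_simps power2_eq_square)
  with d show "\<exists>d. ((\<lambda>t. tan t / t) has_real_derivative d) (at t) \<and> 0 \<le> d" by force
qed

text \<open>Since \<open>tan y / y\<close> increases, \<open>4 y cos y - (pi\<^sup>2 - 8) sin y\<close> changes sign at most once on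
  \<open>(0, pi/2)\<close>, from nonnegative to negative.\<close>
lemma becker_stark_sign_change:
  fixes z w :: real
  assumes "0 < z" "z \<le> w" "w < pi/2" "0 \<le> 4 * w * cos w - (pi\<^sup>2 - 8) * sin w"
  shows "0 \<le> 4 * z * cos z - (pi\<^sup>2 - 8) * sin z"
proof -
  define c where "c = pi\<^sup>2 - 8"
  have cpos: "c > 0" using pi_squared_gt_8 by (simp add: c_def)
  have cw: "cos w > 0" "cos z > 0" using assms by (auto intro!: cos_gt_zero_pi)
  have "sin w \<le> (4/c) * (w * cos w)" using assms(4) cpos by (simp add: c_def field_simps)
  then have "tan w / w \<le> 4/c" using cw assms by (simp add: tan_def field_simps)
  then have "tan z / z \<le> 4/c" using tan_div_self_mono[OF assms(1-3)] by linarith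
  then have "sin z \<le> (4/c) * (z * cos z)" using cw assms by (simp add: tan_def field_simps)
  then show ?thesis using cpos by (simp add: c_def field_simps)
qed

text \<open>The upper half of the Becker--Stark inequality \<open>tan y \<le> pi\<^sup>2 y / (pi\<^sup>2 - 4 y\<^sup>2)\<close>, in a form
  that is also meaningful at \<open>y = pi/2\<close>. Writing \<open>H\<close> for the difference of the two sides,
  \<open>H' y = y (4 y cos y - (pi\<^sup>2 - 8) sin y)\<close> and \<open>H\<close> vanishes at both ends.\<close>
lemma becker_stark_upper:
  fixes y :: real
  assumes "0 \<le> y" "y \<le> pi/2"
  shows "(pi\<^sup>2 - 4*y\<^sup>2) * sin y \<le> pi\<^sup>2 * y * cos y"
proof -
  define H where "H = (\<lambda>y::real. pi\<^sup>2 * y * cos y - (pi\<^sup>2 - 4*y\<^sup>2) * sin y)"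
  define p where "p = (\<lambda>y::real. 4 * y * cos y - (pi\<^sup>2 - 8) * sin y)"
  have dH: "(H has_real_derivative y * p y) (at y)" for y
    unfolding H_def p_def by (auto intro!: derivative_eq_intros simp: power2_eq_square algebra_simps)
  have p_end: "p (pi/2) < 0" using pi_squared_gt_8 by (simp add: p_def)
  have "0 \<le> H y"
  proof (cases "p y \<ge> 0")
    case True
    then have y: "y < pi/2" using p_end assms(2) by (cases "y = pi/2") auto
    have "H 0 \<le> H y"
    proof (rule DERIV_nonneg_imp_nondecreasing[OF assms(1)])
      fix t assume "0 \<le> t" "t \<le> y"
      then have "0 \<le> t * p t"
        using becker_stark_sign_change[of t y] True y by (cases "t = 0") (auto simp: p_def)
      then show "\<exists>d. (H has_real_derivative d) (at t) \<and> 0 \<le> d" using dH by blast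
    qed
    then show ?thesis by (simp add: H_def)
  next
    case False
    then have y: "y > 0" using assms(1) by (cases "y = 0") (auto simp: p_def)
    have "H (pi/2) \<le> H y"
    proof (rule DERIV_nonpos_imp_nonincreasing[OF assms(2)])
      fix t assume t: "y \<le> t" "t \<le> pi/2"
      have "p t \<le> 0"
      proof (cases "t = pi/2")
        case True
        show ?thesis using p_end unfolding True by simp
      next
        case False
        then have "t < pi/2" using t by simp
        then show ?thesis
          using becker_stark_sign_change[of y t] t y \<open>\<not> p y \<ge> 0\<close> by (force simp: p_def)
      qed
      then have "t * p t \<le> 0" using t y by (simp add: mult_nonneg_nonpos)
      then show "\<exists>d. (H has_real_derivative d) (at t) \<and> d \<le> 0" using dH by blast
    qed
    moreover have "H (pi/2) = 0" by (simp add: H_def power2_eq_square)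
    ultimately show ?thesis by simp
  qed
  then show ?thesis by (simp add: H_def)
qed

section \<open>Bounds for the first Robin eigenvalue of an interval\<close>

text \<open>A lower bound for the first Robin eigenvalue of an interval of length \<open>s\<close>.\<close>
definition robin_interval_lower :: "real \<Rightarrow> real \<Rightarrow> real" where
  "robin_interval_lower s \<alpha> = 2 * \<alpha> * pi\<^sup>2 / (s * (pi\<^sup>2 + 2 * \<alpha> * s))"

text \<open>Any solution of the Riccati equation \<open>\<psi>' = -(m + \<psi>\<^sup>2)\<close> gives a Poincare-type
  inequality: \<open>(\<psi> g\<^sup>2)' + m g\<^sup>2 = g'\<^sup>2 - (g' - \<psi> g)\<^sup>2\<close>.\<close>
lemma riccati_energy_bound:
  fixes g g' \<psi> :: "real \<Rightarrow> real"
  assumes s: "0 \<le> s"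
    and d\<psi>: "\<And>t. t \<in> {0..s} \<Longrightarrow> (\<psi> has_real_derivative -(m + (\<psi> t)\<^sup>2)) (at t)"
    and dg: "\<And>t. (g has_real_derivative g' t) (at t)" and cg': "continuous_on UNIV g'"
  shows "m * integral {0..s} (\<lambda>t. (g t)\<^sup>2)
           \<le> integral {0..s} (\<lambda>t. (g' t)\<^sup>2) + \<psi> 0 * (g 0)\<^sup>2 - \<psi> s * (g s)\<^sup>2"
proof -
  define h' where "h' = (\<lambda>t. -(m + (\<psi> t)\<^sup>2) * (g t)\<^sup>2 + \<psi> t * (2 * g t * g' t))"
  have dh: "((\<lambda>t. \<psi> t * (g t)\<^sup>2) has_real_derivative h' t) (at t)" if "t \<in> {0..s}" for t
    unfolding h'_def by (rule derivative_eq_intros d\<psi>[OF that] dg refl | simp)+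
  have ftc: "(h' has_integral \<psi> s * (g s)\<^sup>2 - \<psi> 0 * (g 0)\<^sup>2) {0..s}"
    using s dh by (intro fundamental_theorem_of_calculus)
      (auto simp: has_real_derivative_iff_has_vector_derivative[symmetric]
            intro: has_field_derivative_at_within)
  have cg: "continuous_on UNIV g" using dg by (rule has_real_derivative_imp_continuous_on)
  have int_g: "(\<lambda>t. (g t)\<^sup>2) integrable_on {0..s}" and int_g': "(\<lambda>t. (g' t)\<^sup>2) integrable_on {0..s}"
    by (intro integrable_if_continuous_on_UNIV continuous_intros cg cg')+
  have "\<psi> s * (g s)\<^sup>2 - \<psi> 0 * (g 0)\<^sup>2 + m * integral {0..s} (\<lambda>t. (g t)\<^sup>2)
          \<le> integral {0..s} (\<lambda>t. (g' t)\<^sup>2)"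
  proof (rule has_integral_le)
    show "((\<lambda>t. h' t + m * (g t)\<^sup>2) has_integral
            \<psi> s * (g s)\<^sup>2 - \<psi> 0 * (g 0)\<^sup>2 + m * integral {0..s} (\<lambda>t. (g t)\<^sup>2)) {0..s}"
      by (intro has_integral_add ftc has_integral_mult_right integrable_integral int_g)
    show "((\<lambda>t. (g' t)\<^sup>2) has_integral integral {0..s} (\<lambda>t. (g' t)\<^sup>2)) {0..s}"
      using int_g' by blast
    have "0 \<le> (g' t - \<psi> t * g t)\<^sup>2" for t by simp
    then show "h' t + m * (g t)\<^sup>2 \<le> (g' t)\<^sup>2" for t
      unfolding h'_def by (simp add: power2_eq_square algebra_simps)
  qed
  then show ?thesis by linarith
qed

lemma tan_riccati:
  fixes x c t :: real
  assumes "cos (x * (t - c)) \<noteq> 0"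
  shows "((\<lambda>t. - x * tan (x * (t - c))) has_real_derivative -(x\<^sup>2 + (- x * tan (x * (t - c)))\<^sup>2)) (at t)"
proof -
  have "((\<lambda>t. - x * tan (x * (t - c))) has_real_derivative - x * (inverse ((cos (x * (t - c)))\<^sup>2) * x)) (at t)"
    using assms by (auto intro!: derivative_eq_intros DERIV_chain2[OF DERIV_tan])
  moreover have "- x * (inverse ((cos (x * (t - c)))\<^sup>2) * x) = - x\<^sup>2 * (1 + (tan (x * (t - c)))\<^sup>2)"
    unfolding tan_sec[OF assms] by (simp add: power2_eq_square power_inverse)
  ultimately show ?thesis by (simp add: power2_eq_square algebra_simps)
qed

text \<open>The constant \<open>m = robin_interval_lower s \<alpha>\<close> is chosen so that the Riccati solution
  \<open>\<psi> t = - sqrt m tan (sqrt m (t - s/2))\<close> exists on \<open>[0, s]\<close> and has \<open>\<psi> 0 = - \<psi> s \<le> \<alpha>\<close>;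
  the estimate at the endpoints is exactly the Becker--Stark inequality.\<close>
lemma robin_interval_lower_tan:
  fixes s \<alpha> :: real
  assumes s: "s > 0" and a: "\<alpha> > 0"
  defines "x \<equiv> sqrt (robin_interval_lower s \<alpha>)"
  shows "x * s / 2 < pi / 2" and "x * tan (x * s / 2) \<le> \<alpha>"
proof -
  define m where "m = robin_interval_lower s \<alpha>"
  have mpos: "m > 0"
    using s a unfolding m_def robin_interval_lower_def by (intro divide_pos_pos mult_pos_pos add_pos_pos) auto
  have xpos: "x > 0" and xx: "x\<^sup>2 = m" using mpos by (auto simp: x_def m_def)
  define y where "y = x * s / 2"
  have ypos: "y > 0" using xpos s by (simp add: y_def)
  have y2: "4 * y\<^sup>2 = m * s\<^sup>2" using xx by (simp add: y_def power2_eq_square field_simps)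
  have key: "pi\<^sup>2 * m * s / 2 = \<alpha> * (pi\<^sup>2 - m * s\<^sup>2)"
  proof -
    have "pi\<^sup>2 + 2 * \<alpha> * s > 0" using s a by (intro add_pos_pos) auto
    then have "m * (s * (pi\<^sup>2 + 2 * \<alpha> * s)) = 2 * \<alpha> * pi\<^sup>2"
      using s by (simp add: m_def robin_interval_lower_def)
    then show ?thesis by (simp add: power2_eq_square algebra_simps)
  qed
  have "pi\<^sup>2 * m * s / 2 > 0" using mpos s by simp
  then have "\<alpha> * (pi\<^sup>2 - m * s\<^sup>2) > 0" unfolding key .
  then have ms: "pi\<^sup>2 - m * s\<^sup>2 > 0" using a by (simp add: zero_less_mult_iff)
  have "(2*y)\<^sup>2 < pi\<^sup>2" using y2 ms by (simp add: power2_eq_square)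
  then have "2*y < pi" using ypos by (simp add: power_less_imp_less_base[of "2*y" 2 pi])
  then show ylt: "x * s / 2 < pi / 2" by (simp add: y_def)
  have cy: "cos y > 0" using ypos ylt by (intro cos_gt_zero_pi) (auto simp: y_def)
  have "(pi\<^sup>2 - 4*y\<^sup>2) * sin y \<le> pi\<^sup>2 * y * cos y"
    using becker_stark_upper[of y] ypos ylt by (simp add: y_def)
  then have "tan y * (pi\<^sup>2 - 4*y\<^sup>2) \<le> pi\<^sup>2 * y"
    using cy by (simp add: tan_def field_simps)
  then have "x * tan y * (pi\<^sup>2 - m * s\<^sup>2) \<le> x * (pi\<^sup>2 * y)"
    using y2 xpos by (simp add: mult.assoc mult_left_mono)
  also have "\<dots> = \<alpha> * (pi\<^sup>2 - m * s\<^sup>2)"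
    using key xx by (simp add: y_def power2_eq_square field_simps)
  finally show "x * tan (x * s / 2) \<le> \<alpha>" using ms by (simp add: y_def)
qed

lemma robin_interval_inequality:
  fixes g g' :: "real \<Rightarrow> real" and s \<alpha> :: real
  assumes s: "s > 0" and a: "\<alpha> > 0"
    and dg: "\<And>t. (g has_real_derivative g' t) (at t)" and cg': "continuous_on UNIV g'"
  shows "robin_interval_lower s \<alpha> * integral {0..s} (\<lambda>t. (g t)\<^sup>2)
           \<le> integral {0..s} (\<lambda>t. (g' t)\<^sup>2) + \<alpha> * ((g 0)\<^sup>2 + (g s)\<^sup>2)"
proof -
  define x where "x = sqrt (robin_interval_lower s \<alpha>)"
  have xx: "x\<^sup>2 = robin_interval_lower s \<alpha>" and x: "x > 0"
    using s a by (auto simp: x_def robin_interval_lower_def intro!: divide_pos_pos mult_pos_pos add_pos_pos)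
  note tan = robin_interval_lower_tan[OF s a, folded x_def]
  define \<psi> where "\<psi> = (\<lambda>t. - x * tan (x * (t - s/2)))"
  have d\<psi>: "(\<psi> has_real_derivative -(x\<^sup>2 + (\<psi> t)\<^sup>2)) (at t)" if "t \<in> {0..s}" for t
  proof -
    have "\<bar>t - s/2\<bar> \<le> s/2" using that by (intro abs_leI) auto
    then have "\<bar>x * (t - s/2)\<bar> \<le> x * s / 2" using x by (simp add: abs_mult mult_left_mono)
    then have "cos (x * (t - s/2)) > 0" using tan(1) by (intro cos_gt_zero_pi) auto
    then show ?thesis unfolding \<psi>_def by (intro tan_riccati) simp
  qed
  define T where "T = x * tan (x * s / 2)"
  have "\<psi> 0 = T" "\<psi> s = - T"
    by (simp_all add: \<psi>_def T_def field_simps)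
  moreover have "T * (g 0)\<^sup>2 + T * (g s)\<^sup>2 \<le> \<alpha> * (g 0)\<^sup>2 + \<alpha> * (g s)\<^sup>2"
    using tan(2) unfolding T_def by (intro add_mono mult_right_mono) auto
  ultimately have "\<psi> 0 * (g 0)\<^sup>2 - \<psi> s * (g s)\<^sup>2 \<le> \<alpha> * ((g 0)\<^sup>2 + (g s)\<^sup>2)"
    by (simp add: algebra_simps)
  then show ?thesis
    using riccati_energy_bound[of s \<psi> "x\<^sup>2", OF _ d\<psi> dg cg'] s unfolding xx by linarith
qed

lemma integral_sine_test_sq:
  fixes s a b :: real
  assumes s: "s > 0"
  shows "integral {0..s} (\<lambda>t. (a + b * sin (pi * t / s))\<^sup>2) = s * (a\<^sup>2 + 4 * a * b / pi + b\<^sup>2 / 2)"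
proof -
  define F where "F = (\<lambda>t. a\<^sup>2 * t - 2 * a * b * (s / pi) * cos (pi * t / s)
                          + b\<^sup>2 * (t / 2 - s / (4 * pi) * sin (2 * (pi * t / s))))"
  have "(F has_real_derivative (a + b * sin (pi * t / s))\<^sup>2) (at t)" for t
  proof -
    have "(F has_real_derivative a\<^sup>2 * 1 - 2 * a * b * (s / pi) * (- sin (pi * t / s) * (pi / s))
          + b\<^sup>2 * (1 / 2 - s / (4 * pi) * (cos (2 * (pi * t / s)) * (2 * (pi / s))))) (at t)"
      unfolding F_def using s by (auto intro!: derivative_eq_intros)
    moreover have "a\<^sup>2 * 1 - 2 * a * b * (s / pi) * (- sin (pi * t / s) * (pi / s))
          + b\<^sup>2 * (1 / 2 - s / (4 * pi) * (cos (2 * (pi * t / s)) * (2 * (pi / s))))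
        = (a + b * sin (pi * t / s))\<^sup>2"
      using s unfolding cos_double_sin by (simp add: field_simps power2_eq_square)
    ultimately show ?thesis by simp
  qed
  then have "integral {0..s} (\<lambda>t. (a + b * sin (pi * t / s))\<^sup>2) = F s - F 0"
    using s by (intro integral_eq_antiderivative) auto
  also have "\<dots> = s * (a\<^sup>2 + 4 * a * b / pi + b\<^sup>2 / 2)"
    unfolding F_def using s by (simp add: field_simps)
  finally show ?thesis .
qed

lemma integral_sine_test_sq_pos:
  fixes s a b :: real
  assumes s: "s > 0" and a: "a \<noteq> 0"
  shows "integral {0..s} (\<lambda>t. (a + b * sin (pi * t / s))\<^sup>2) > 0"
proof -
  have "(a + 2 * b / pi)\<^sup>2 + b\<^sup>2 * ((pi\<^sup>2 - 8) / (2 * pi\<^sup>2)) > 0"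
  proof (cases "b = 0")
    case False
    then have "b\<^sup>2 * ((pi\<^sup>2 - 8) / (2 * pi\<^sup>2)) > 0" using pi_squared_gt_8 by simp
    then show ?thesis by (simp add: add_nonneg_pos)
  qed (use a in simp)
  moreover have "a\<^sup>2 + 4 * a * b / pi + b\<^sup>2 / 2 = (a + 2 * b / pi)\<^sup>2 + b\<^sup>2 * ((pi\<^sup>2 - 8) / (2 * pi\<^sup>2))"
    by (simp add: field_simps power2_eq_square)
  ultimately show ?thesis unfolding integral_sine_test_sq[OF s] using s by simp
qed

lemma integral_cos_sq:
  fixes s b :: real
  assumes s: "s > 0"
  shows "integral {0..s} (\<lambda>t. (b * (pi / s) * cos (pi * t / s))\<^sup>2) = b\<^sup>2 * pi\<^sup>2 / (2 * s)"
proof -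
  define F where "F = (\<lambda>t. b\<^sup>2 * (pi / s)\<^sup>2 * (t / 2 + s / (4 * pi) * sin (2 * (pi * t / s))))"
  have "(F has_real_derivative (b * (pi / s) * cos (pi * t / s))\<^sup>2) (at t)" for t
  proof -
    have "(F has_real_derivative
        b\<^sup>2 * (pi / s)\<^sup>2 * (1 / 2 + s / (4 * pi) * (cos (2 * (pi * t / s)) * (2 * (pi / s))))) (at t)"
      unfolding F_def using s by (auto intro!: derivative_eq_intros)
    moreover have "b\<^sup>2 * (pi / s)\<^sup>2 * (1 / 2 + s / (4 * pi) * (cos (2 * (pi * t / s)) * (2 * (pi / s))))
        = (b * (pi / s) * cos (pi * t / s))\<^sup>2"
      using s unfolding cos_double_cos by (simp add: field_simps power2_eq_square)
    ultimately show ?thesis by simp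
  qed
  then have "integral {0..s} (\<lambda>t. (b * (pi / s) * cos (pi * t / s))\<^sup>2) = F s - F 0"
    using s by (intro integral_eq_antiderivative) auto
  also have "\<dots> = b\<^sup>2 * pi\<^sup>2 / (2 * s)"
    unfolding F_def using s by (simp add: field_simps power2_eq_square)
  finally show ?thesis .
qed

text \<open>An upper bound for the first Robin eigenvalue of an interval of length \<open>s\<close>: the smaller
  eigenvalue of the Robin form restricted to the span of \<open>1\<close> and \<open>sin (pi t / s)\<close>.\<close>
definition robin_interval_upper :: "real \<Rightarrow> real \<Rightarrow> real" where
  "robin_interval_upper s \<alpha> =
     pi\<^sup>2 * (pi\<^sup>2 + 2 * \<alpha> * s - sqrt ((pi\<^sup>2 - 2 * \<alpha> * s)\<^sup>2 + 64 * \<alpha> * s)) / (2 * (pi\<^sup>2 - 8) * s\<^sup>2)"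

lemma robin_interval_upper_root:
  fixes s \<alpha> :: real
  assumes s: "s > 0" and \<alpha>: "\<alpha> > 0"
  defines "\<mu> \<equiv> robin_interval_upper s \<alpha>"
  shows "\<mu> > 0"
    and "s\<^sup>2 * (pi\<^sup>2 - 8) / (2 * pi\<^sup>2) * \<mu>\<^sup>2 - (\<alpha> * s + pi\<^sup>2 / 2) * \<mu> + \<alpha> * pi\<^sup>2 / s = 0"
proof -
  define P where "P = pi\<^sup>2"
  define R where "R = sqrt ((P - 2 * \<alpha> * s)\<^sup>2 + 64 * \<alpha> * s)"
  have P8: "P > 8" unfolding P_def using pi_squared_gt_8 .
  have R2: "R\<^sup>2 = (P - 2 * \<alpha> * s)\<^sup>2 + 64 * \<alpha> * s" unfolding R_def using s \<alpha> by simp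
  have "(P + 2 * \<alpha> * s)\<^sup>2 - R\<^sup>2 = 8 * \<alpha> * s * (P - 8)" unfolding R2 by (simp add: power2_eq_square algebra_simps)
  also have "\<dots> > 0" using \<alpha> s P8 by simp
  finally have "R\<^sup>2 < (P + 2 * \<alpha> * s)\<^sup>2" by simp
  moreover have "0 \<le> P + 2 * \<alpha> * s" using \<alpha> s P8 by simp
  ultimately have RP: "R < P + 2 * \<alpha> * s" by (rule power_less_imp_less_base)
  have mu: "\<mu> = P * (P + 2 * \<alpha> * s - R) / (2 * (P - 8) * s\<^sup>2)"
    unfolding \<mu>_def robin_interval_upper_def P_def R_def ..
  show "\<mu> > 0" unfolding mu using RP P8 s by (intro divide_pos_pos mult_pos_pos) auto
  have e: "(2 * (P - 8) * s\<^sup>2) * \<mu> = P * (P + 2 * \<alpha> * s - R)" unfolding mu using P8 s by simp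
  have "(2 * (P - 8) * s\<^sup>2) * (2 * P * s) * (s\<^sup>2 * (P - 8) / (2 * P) * \<mu>\<^sup>2 - (\<alpha> * s + P / 2) * \<mu> + \<alpha> * P / s)
      = s * ((2 * (P - 8) * s\<^sup>2) * \<mu>)\<^sup>2 / 2 - (2 * \<alpha> * s + P) * P * s * ((2 * (P - 8) * s\<^sup>2) * \<mu>)
        + 4 * \<alpha> * P\<^sup>2 * (P - 8) * s\<^sup>2"
    using P8 s by (simp add: field_simps power2_eq_square)
  also have "\<dots> = s * P\<^sup>2 / 2 * (R\<^sup>2 - ((P - 2 * \<alpha> * s)\<^sup>2 + 64 * \<alpha> * s))"
    unfolding e by (simp add: power2_eq_square field_simps)
  also have "\<dots> = 0" unfolding R2 by simp
  finally show "s\<^sup>2 * (pi\<^sup>2 - 8) / (2 * pi\<^sup>2) * \<mu>\<^sup>2 - (\<alpha> * s + pi\<^sup>2 / 2) * \<mu> + \<alpha> * pi\<^sup>2 / s = 0"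
    using P8 s unfolding P_def by simp
qed

lemma robin_interval_upper_test_function:
  fixes s \<alpha> :: real
  assumes s: "s > 0" and \<alpha>: "\<alpha> > 0"
  obtains f f' :: "real \<Rightarrow> real"
  where "\<And>t. (f has_real_derivative f' t) (at t)" and "continuous_on UNIV f'"
    and "integral {0..s} (\<lambda>t. (f t)\<^sup>2) > 0"
    and "integral {0..s} (\<lambda>t. (f' t)\<^sup>2) + \<alpha> * ((f 0)\<^sup>2 + (f s)\<^sup>2)
           = robin_interval_upper s \<alpha> * integral {0..s} (\<lambda>t. (f t)\<^sup>2)"
proof -
  define \<mu> where "\<mu> = robin_interval_upper s \<alpha>"
  define a where "a = 2 * \<mu> * s / pi"
  define b where "b = 2 * \<alpha> - \<mu> * s"
  define f where "f = (\<lambda>t. a + b * sin (pi * t / s))"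
  define f' where "f' = (\<lambda>t. b * (pi / s) * cos (pi * t / s))"
  note root = robin_interval_upper_root[OF s \<alpha>, folded \<mu>_def]
  show thesis
  proof (rule that)
    show "(f has_real_derivative f' t) (at t)" for t
      unfolding f_def f'_def using s by (auto intro!: derivative_eq_intros)
    show "continuous_on UNIV f'" unfolding f'_def using s by (auto intro!: continuous_intros)
    have I0: "integral {0..s} (\<lambda>t. (f t)\<^sup>2) = s * (a\<^sup>2 + 4 * a * b / pi + b\<^sup>2 / 2)"
      unfolding f_def using s by (rule integral_sine_test_sq)
    have "a \<noteq> 0" unfolding a_def using root(1) s by simp
    then show "integral {0..s} (\<lambda>t. (f t)\<^sup>2) > 0"
      unfolding f_def by (rule integral_sine_test_sq_pos[OF s])
    have "integral {0..s} (\<lambda>t. (f' t)\<^sup>2) + \<alpha> * ((f 0)\<^sup>2 + (f s)\<^sup>2) - \<mu> * integral {0..s} (\<lambda>t. (f t)\<^sup>2)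
        = b\<^sup>2 * pi\<^sup>2 / (2 * s) + \<alpha> * (2 * a\<^sup>2) - \<mu> * (s * (a\<^sup>2 + 4 * a * b / pi + b\<^sup>2 / 2))"
      unfolding I0 f'_def integral_cos_sq[OF s] by (simp add: f_def)
    also have "\<dots> = b * (s\<^sup>2 * (pi\<^sup>2 - 8) / (2 * pi\<^sup>2) * \<mu>\<^sup>2 - (\<alpha> * s + pi\<^sup>2 / 2) * \<mu> + \<alpha> * pi\<^sup>2 / s)"
      unfolding a_def b_def using s by (simp add: field_simps power2_eq_square)
    also have "\<dots> = 0" unfolding root(2) by simp
    finally show "integral {0..s} (\<lambda>t. (f' t)\<^sup>2) + \<alpha> * ((f 0)\<^sup>2 + (f s)\<^sup>2)
        = robin_interval_upper s \<alpha> * integral {0..s} (\<lambda>t. (f t)\<^sup>2)"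
      unfolding \<mu>_def by simp
  qed
qed

definition partial_x :: "(pt \<Rightarrow> real) \<Rightarrow> pt \<Rightarrow> real" where
  "partial_x u p = frechet_derivative u (at p) (1, 0)"

definition partial_y :: "(pt \<Rightarrow> real) \<Rightarrow> pt \<Rightarrow> real" where
  "partial_y u p = frechet_derivative u (at p) (0, 1)"

lemma dirichlet_eq_partials:
  "dirichlet \<Omega> u = integral \<Omega> (\<lambda>p. (partial_x u p)\<^sup>2 + (partial_y u p)\<^sup>2)"
  unfolding dirichlet_def partial_x_def partial_y_def ..

lemma linear_pt_eq:
  fixes L :: "pt \<Rightarrow> real"
  assumes "linear L"
  shows "L h = fst h * L (1, 0) + snd h * L (0, 1)"
proof -
  have "L h = L (fst h *\<^sub>R (1, 0) + snd h *\<^sub>R (0, 1))" by (cases h) simp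
  then show ?thesis unfolding linear_add[OF assms] linear_scale[OF assms] by simp
qed

lemma has_derivative_imp_partials:
  fixes u :: "pt \<Rightarrow> real"
  assumes du: "(u has_derivative L) (at (x, y))"
  shows "((\<lambda>t. u (t, y)) has_real_derivative L (1, 0)) (at x)"
    and "((\<lambda>t. u (x, t)) has_real_derivative L (0, 1)) (at y)"
proof -
  have lin: "linear L" using du has_derivative_linear by blast
  have "((\<lambda>t. (t, y)) has_derivative (\<lambda>h. (h, 0))) (at x)"
    by (auto intro!: derivative_eq_intros)
  then have "((u \<circ> (\<lambda>t. (t, y))) has_derivative (L \<circ> (\<lambda>h. (h, 0)))) (at x)"
    by (rule diff_chain_at) (simp add: du)
  moreover have "L \<circ> (\<lambda>h. (h, 0)) = (*) (L (1, 0))"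
  proof
    fix h :: real
    show "(L \<circ> (\<lambda>h. (h, 0))) h = L (1, 0) * h" using linear_pt_eq[OF lin, of "(h, 0)"] by simp
  qed
  ultimately show "((\<lambda>t. u (t, y)) has_real_derivative L (1, 0)) (at x)"
    by (simp add: has_field_derivative_def o_def)
  have "((\<lambda>t. (x, t)) has_derivative (\<lambda>h. (0, h))) (at y)"
    by (auto intro!: derivative_eq_intros)
  then have "((u \<circ> (\<lambda>t. (x, t))) has_derivative (L \<circ> (\<lambda>h. (0, h)))) (at y)"
    by (rule diff_chain_at) (simp add: du)
  moreover have "L \<circ> (\<lambda>h. (0, h)) = (*) (L (0, 1))"
  proof
    fix h :: real
    show "(L \<circ> (\<lambda>h. (0, h))) h = L (0, 1) * h" using linear_pt_eq[OF lin, of "(0, h)"] by simp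
  qed
  ultimately show "((\<lambda>t. u (x, t)) has_real_derivative L (0, 1)) (at y)"
    by (simp add: has_field_derivative_def o_def)
qed

lemma C1_fun_has_derivative:
  "C1_fun u \<Longrightarrow> (u has_derivative frechet_derivative u (at p)) (at p)"
  unfolding C1_fun_def differentiable_on_def using frechet_derivative_works by blast

lemma C1_fun_has_partial_x:
  "C1_fun u \<Longrightarrow> ((\<lambda>t. u (t, y)) has_real_derivative partial_x u (x, y)) (at x)"
  unfolding partial_x_def by (rule has_derivative_imp_partials(1)[OF C1_fun_has_derivative])

lemma C1_fun_has_partial_y:
  "C1_fun u \<Longrightarrow> ((\<lambda>t. u (x, t)) has_real_derivative partial_y u (x, y)) (at y)"
  unfolding partial_y_def by (rule has_derivative_imp_partials(2)[OF C1_fun_has_derivative])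

lemma C1_fun_continuous:
  assumes "C1_fun u"
  shows "continuous_on UNIV u" "continuous_on UNIV (partial_x u)" "continuous_on UNIV (partial_y u)"
  using assms unfolding C1_fun_def partial_x_def[abs_def] partial_y_def[abs_def]
  by (auto intro: differentiable_imp_continuous_on)

lemma C1_fun_partialsI:
  fixes u P Q :: "pt \<Rightarrow> real"
  assumes du: "\<And>p. (u has_derivative (\<lambda>h. fst h * P p + snd h * Q p)) (at p)"
    and cP: "continuous_on UNIV P" and cQ: "continuous_on UNIV Q"
  shows "C1_fun u" "partial_x u = P" "partial_y u = Q"
proof -
  have fd: "frechet_derivative u (at p) = (\<lambda>h. fst h * P p + snd h * Q p)" for p
    using frechet_derivative_at[OF du] by simp
  show "partial_x u = P" "partial_y u = Q"
    by (simp_all add: fun_eq_iff partial_x_def partial_y_def fd)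
  show "C1_fun u"
    unfolding C1_fun_def fd using du cP cQ by (auto simp: differentiable_on_def differentiable_def)
qed

lemma C1_fun_frechet_derivative_eq:
  assumes "C1_fun u"
  shows "frechet_derivative u (at p) h = fst h * partial_x u p + snd h * partial_y u p"
  unfolding partial_x_def partial_y_def
  by (rule linear_pt_eq[OF has_derivative_linear[OF C1_fun_has_derivative[OF assms]]])

lemma C1_fun_lincomb:
  fixes c :: "nat \<Rightarrow> real"
  assumes u: "\<forall>i<k. C1_fun (u i)"
  defines "v \<equiv> \<lambda>x. \<Sum>i<k. c i * u i x"
  shows "C1_fun v"
    and "partial_x v = (\<lambda>p. \<Sum>i<k. c i * partial_x (u i) p)"
    and "partial_y v = (\<lambda>p. \<Sum>i<k. c i * partial_y (u i) p)"
proof -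
  have dv: "(v has_derivative
          (\<lambda>h. fst h * (\<Sum>i<k. c i * partial_x (u i) p) + snd h * (\<Sum>i<k. c i * partial_y (u i) p))) (at p)"
    for p
  proof -
    have "(v has_derivative (\<lambda>h. \<Sum>i<k. c i * frechet_derivative (u i) (at p) h)) (at p)"
      unfolding v_def by (intro has_derivative_sum has_derivative_mult_right) (simp add: C1_fun_has_derivative u)
    then show ?thesis
      by (rule has_derivative_eq_rhs)
        (simp add: fun_eq_iff C1_fun_frechet_derivative_eq u sum.distrib sum_distrib_left
          distrib_left mult.left_commute)
  qed
  have cP: "continuous_on UNIV (\<lambda>p. \<Sum>i<k. c i * partial_x (u i) p)"
    and cQ: "continuous_on UNIV (\<lambda>p. \<Sum>i<k. c i * partial_y (u i) p)"
    using u by (auto intro!: continuous_intros simp: C1_fun_continuous)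
  show "C1_fun v" "partial_x v = (\<lambda>p. \<Sum>i<k. c i * partial_x (u i) p)"
    "partial_y v = (\<lambda>p. \<Sum>i<k. c i * partial_y (u i) p)"
    by (fact C1_fun_partialsI[OF dv cP cQ])+
qed

lemma C1_fun_tensor:
  fixes X Y X' Y' :: "real \<Rightarrow> real"
  assumes dX: "\<And>x. (X has_real_derivative X' x) (at x)" and dY: "\<And>y. (Y has_real_derivative Y' y) (at y)"
    and cX': "continuous_on UNIV X'" and cY': "continuous_on UNIV Y'"
  defines "u \<equiv> \<lambda>p. X (fst p) * Y (snd p)"
  shows "C1_fun u"
    and "partial_x u = (\<lambda>p. X' (fst p) * Y (snd p))"
    and "partial_y u = (\<lambda>p. X (fst p) * Y' (snd p))"
proof -
  have du: "(u has_derivative (\<lambda>h. fst h * (X' (fst p) * Y (snd p)) + snd h * (X (fst p) * Y' (snd p)))) (at p)"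
    for p :: pt
  proof -
    have "((\<lambda>p. X (fst p)) has_derivative (\<lambda>h. fst h * X' (fst p))) (at p)"
      by (rule DERIV_compose_FDERIV[OF dX has_derivative_fst[OF has_derivative_ident]])
    moreover have "((\<lambda>p. Y (snd p)) has_derivative (\<lambda>h. snd h * Y' (snd p))) (at p)"
      by (rule DERIV_compose_FDERIV[OF dY has_derivative_snd[OF has_derivative_ident]])
    ultimately show ?thesis unfolding u_def
      by (rule has_derivative_eq_rhs[OF has_derivative_mult]) (auto simp: fun_eq_iff algebra_simps)
  qed
  have cX: "continuous_on UNIV X" using dX by (rule has_real_derivative_imp_continuous_on)
  have cY: "continuous_on UNIV Y" using dY by (rule has_real_derivative_imp_continuous_on)
  have cP: "continuous_on UNIV (\<lambda>p. X' (fst p) * Y (snd p))"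
    by (intro continuous_on_mult continuous_on_UNIV_comp[OF cX'] continuous_on_UNIV_comp[OF cY]
        continuous_on_fst continuous_on_snd continuous_on_id)
  have cQ: "continuous_on UNIV (\<lambda>p. X (fst p) * Y' (snd p))"
    by (intro continuous_on_mult continuous_on_UNIV_comp[OF cX] continuous_on_UNIV_comp[OF cY']
        continuous_on_fst continuous_on_snd continuous_on_id)
  show "C1_fun u" "partial_x u = (\<lambda>p. X' (fst p) * Y (snd p))"
    "partial_y u = (\<lambda>p. X (fst p) * Y' (snd p))"
    by (fact C1_fun_partialsI[OF du cP cQ])+
qed

lemma integral_rectangle_swap:
  fixes f :: "pt \<Rightarrow> real"
  assumes "continuous_on UNIV f"
  shows "integral (cbox (c, a) (d, b)) (\<lambda>p. f (snd p, fst p)) = integral (cbox (a, c) (b, d)) f"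
  using integral_swap_2dim[of a c b d "\<lambda>x y. f (x, y)"] continuous_on_subset[OF assms]
  by (simp add: case_prod_beta')

lemma integral_rectangle_iterated:
  fixes f :: "pt \<Rightarrow> real"
  assumes f: "continuous_on UNIV f"
  shows "integral (cbox (a, c) (b, d)) f = integral {a..b} (\<lambda>x. integral {c..d} (\<lambda>y. f (x, y)))"
    and "integral (cbox (a, c) (b, d)) f = integral {c..d} (\<lambda>y. integral {a..b} (\<lambda>x. f (x, y)))"
    and "(\<lambda>y. integral {a..b} (\<lambda>x. f (x, y))) integrable_on {c..d}"
proof -
  have f': "continuous_on UNIV (\<lambda>p. f (snd p, fst p))"
    by (rule continuous_on_compose2[OF f]) (auto intro!: continuous_intros)
  show "integral (cbox (a, c) (b, d)) f = integral {a..b} (\<lambda>x. integral {c..d} (\<lambda>y. f (x, y)))"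
    using integral_prod_continuous[of a c b d f] continuous_on_subset[OF f] by (simp add: cbox_interval)
  show "integral (cbox (a, c) (b, d)) f = integral {c..d} (\<lambda>y. integral {a..b} (\<lambda>x. f (x, y)))"
    using integral_prod_continuous[of c a d b "\<lambda>p. f (snd p, fst p)"] continuous_on_subset[OF f']
      integral_rectangle_swap[OF f] by (simp add: cbox_interval)
  show "(\<lambda>y. integral {a..b} (\<lambda>x. f (x, y))) integrable_on {c..d}"
    using integral_integrable_2dim[of c a d b "\<lambda>p. f (snd p, fst p)"] continuous_on_subset[OF f']
    by (simp add: cbox_interval)
qed

lemma integral_separable:
  fixes g h :: "real \<Rightarrow> real"
  assumes "continuous_on UNIV g" "continuous_on UNIV h"
  shows "integral (cbox (a, c) (b, d)) (\<lambda>p. g (fst p) * h (snd p)) = integral {a..b} g * integral {c..d} h"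
proof -
  have "continuous_on UNIV (\<lambda>p::pt. g (fst p) * h (snd p))"
    by (intro continuous_intros continuous_on_compose2[OF assms(1)] continuous_on_compose2[OF assms(2)]) auto
  then show ?thesis by (simp add: integral_rectangle_iterated(1))
qed

lemma sq_cell_eq_box: "sq_cell s i = box (2 * real i * s, 0) (2 * real i * s + s, s)"
  by (auto simp: sq_cell_def mem_box Basis_prod_def inner_Pair)

lemma integral_sq_cell:
  fixes f :: "pt \<Rightarrow> real"
  shows "integral (sq_cell s i) f = integral (cbox (0, 0) (s, s)) (\<lambda>p. f (p + (2 * real i * s, 0)))"
proof -
  let ?a = "(2 * real i * s, 0::real)"
  have "integral (sq_cell s i) f = integral (cbox ?a (?a + (s, s))) f"
    unfolding sq_cell_eq_box integral_open_interval by simp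
  also have "\<dots> = integral (cbox (?a - ?a) (?a + (s, s) - ?a)) (\<lambda>p. f (p + ?a))"
    by (rule integral_shift_cbox[symmetric])
  finally show ?thesis by (simp add: zero_prod_def)
qed

lemma integrable_on_sq_cell:
  fixes f :: "pt \<Rightarrow> real"
  shows "continuous_on UNIV f \<Longrightarrow> f integrable_on sq_cell s i"
  unfolding sq_cell_eq_box integrable_on_open_interval by (rule integrable_if_continuous_on_UNIV)

lemma sq_cells_disjoint:
  assumes "s > 0" "i \<noteq> j"
  shows "sq_cell s i \<inter> sq_cell s j = {}"
proof -
  have *: "sq_cell s i \<inter> sq_cell s j = {}" if "i < j" for i j :: nat
  proof -
    have "(real i + 1) * (2 * s) \<le> real j * (2 * s)"
      using that assms(1) by (intro mult_right_mono) auto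
    then have "2 * real i * s + s < 2 * real j * s" using assms(1) by (simp add: algebra_simps)
    then show ?thesis unfolding sq_cell_def by auto
  qed
  consider "i < j" | "j < i" using assms(2) by linarith
  then show ?thesis using *[of i j] *[of j i] by cases (simp_all add: Int_commute)
qed

lemma has_integral_union_sq_cells:
  fixes f :: "pt \<Rightarrow> real"
  assumes "continuous_on UNIV f" "s > 0"
  shows "(f has_integral (\<Sum>i<k. integral (sq_cell s i) f)) (\<Union>i<k. sq_cell s i)"
proof (rule has_integral_UN)
  show "(f has_integral integral (sq_cell s i) f) (sq_cell s i)" for i
    using integrable_on_sq_cell[OF assms(1)] by (rule integrable_integral)
  show "pairwise (\<lambda>i i'. negligible (sq_cell s i \<inter> sq_cell s i')) {..<k}"
    unfolding pairwise_def using sq_cells_disjoint[OF assms(2)] by simp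
qed simp

lemma sq_side_pos: "A > 0 \<Longrightarrow> k \<ge> 1 \<Longrightarrow> sq_side A k > 0"
  unfolding sq_side_def by simp

lemma integral_S_union:
  fixes f :: "pt \<Rightarrow> real"
  assumes "continuous_on UNIV f" "A > 0" "k \<ge> 1"
  shows "integral (S_union A k) f = (\<Sum>i<k. integral (sq_cell (sq_side A k) i) f)"
  unfolding S_union_def using has_integral_union_sq_cells[OF assms(1) sq_side_pos[OF assms(2,3)]]
  by (rule integral_unique)

lemma integrable_on_S_union:
  fixes f :: "pt \<Rightarrow> real"
  assumes "continuous_on UNIV f" "A > 0" "k \<ge> 1"
  shows "f integrable_on S_union A k"
  unfolding S_union_def using has_integral_union_sq_cells[OF assms(1) sq_side_pos[OF assms(2,3)]]
  by (rule has_integral_integrable)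

section \<open>The Robin inequality on squares and on \<open>S_k\<close>\<close>

lemma robin_rectangle_x:
  fixes w P :: "pt \<Rightarrow> real"
  assumes a: "a > 0" and b: "b \<ge> 0" and \<alpha>: "\<alpha> > 0"
    and dP: "\<And>x y. ((\<lambda>t. w (t, y)) has_real_derivative P (x, y)) (at x)"
    and cP: "continuous_on UNIV P" and cw: "continuous_on UNIV w"
  shows "robin_interval_lower a \<alpha> * integral (cbox (0, 0) (a, b)) (\<lambda>p. (w p)\<^sup>2)
           \<le> integral (cbox (0, 0) (a, b)) (\<lambda>p. (P p)\<^sup>2)
              + \<alpha> * integral {0..b} (\<lambda>y. (w (0, y))\<^sup>2 + (w (a, y))\<^sup>2)"
proof -
  define m where "m = robin_interval_lower a \<alpha>"
  have cw2: "continuous_on UNIV (\<lambda>p. (w p)\<^sup>2)" and cP2: "continuous_on UNIV (\<lambda>p. (P p)\<^sup>2)"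
    by (intro continuous_intros cw cP)+
  have "continuous_on UNIV (\<lambda>y. (w (x, y))\<^sup>2)" for x
    by (intro continuous_intros continuous_on_slices cw)
  then have int_edge: "(\<lambda>y. (w (0, y))\<^sup>2 + (w (a, y))\<^sup>2) integrable_on {0..b}"
    by (intro integrable_add integrable_if_continuous_on_UNIV)
  have int_P: "(\<lambda>y. integral {0..a} (\<lambda>x. (P (x, y))\<^sup>2)) integrable_on {0..b}"
    by (rule integral_rectangle_iterated(3)[OF cP2])
  have "m * integral (cbox (0, 0) (a, b)) (\<lambda>p. (w p)\<^sup>2)
          = integral {0..b} (\<lambda>y. m * integral {0..a} (\<lambda>x. (w (x, y))\<^sup>2))"
    by (simp add: integral_rectangle_iterated(2)[OF cw2])
  also have "\<dots> \<le> integral {0..b} (\<lambda>y. integral {0..a} (\<lambda>x. (P (x, y))\<^sup>2)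
                                      + \<alpha> * ((w (0, y))\<^sup>2 + (w (a, y))\<^sup>2))"
  proof (rule integral_le)
    show "(\<lambda>y. m * integral {0..a} (\<lambda>x. (w (x, y))\<^sup>2)) integrable_on {0..b}"
      using integral_rectangle_iterated(3)[OF cw2] by (rule integrable_on_mult_right)
    show "(\<lambda>y. integral {0..a} (\<lambda>x. (P (x, y))\<^sup>2) + \<alpha> * ((w (0, y))\<^sup>2 + (w (a, y))\<^sup>2)) integrable_on {0..b}"
      by (rule integrable_add[OF int_P integrable_on_mult_right[OF int_edge]])
    show "m * integral {0..a} (\<lambda>x. (w (x, y))\<^sup>2)
            \<le> integral {0..a} (\<lambda>x. (P (x, y))\<^sup>2) + \<alpha> * ((w (0, y))\<^sup>2 + (w (a, y))\<^sup>2)" for y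
      unfolding m_def
      by (rule robin_interval_inequality[OF a \<alpha> dP continuous_on_slices(1)[OF cP]])
  qed
  also have "\<dots> = integral (cbox (0, 0) (a, b)) (\<lambda>p. (P p)\<^sup>2)
                    + \<alpha> * integral {0..b} (\<lambda>y. (w (0, y))\<^sup>2 + (w (a, y))\<^sup>2)"
    by (simp add: integral_rectangle_iterated(2)[OF cP2]
        integral_add[OF int_P integrable_on_mult_right[OF int_edge]])
  finally show ?thesis unfolding m_def .
qed

lemma robin_square:
  fixes w P Q :: "pt \<Rightarrow> real"
  assumes s: "s > 0" and \<alpha>: "\<alpha> > 0"
    and dP: "\<And>x y. ((\<lambda>t. w (t, y)) has_real_derivative P (x, y)) (at x)"
    and dQ: "\<And>x y. ((\<lambda>t. w (x, t)) has_real_derivative Q (x, y)) (at y)"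
    and cP: "continuous_on UNIV P" and cQ: "continuous_on UNIV Q" and cw: "continuous_on UNIV w"
  shows "2 * robin_interval_lower s \<alpha> * integral (cbox (0, 0) (s, s)) (\<lambda>p. (w p)\<^sup>2)
          \<le> integral (cbox (0, 0) (s, s)) (\<lambda>p. (P p)\<^sup>2 + (Q p)\<^sup>2)
             + \<alpha> * integral {0..s} (\<lambda>t. (w (t, 0))\<^sup>2 + (w (t, s))\<^sup>2 + (w (0, t))\<^sup>2 + (w (s, t))\<^sup>2)"
proof -
  define m where "m = robin_interval_lower s \<alpha>"
  define S where "S = cbox (0, 0) (s, s :: real)"
  have swap: "continuous_on UNIV f \<Longrightarrow> continuous_on UNIV (\<lambda>p. f (snd p, fst p))" for f :: "pt \<Rightarrow> real"
    by (erule continuous_on_compose2) (auto intro!: continuous_intros)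
  have cw2: "continuous_on UNIV (\<lambda>p. (w p)\<^sup>2)" and cP2: "continuous_on UNIV (\<lambda>p. (P p)\<^sup>2)"
    and cQ2: "continuous_on UNIV (\<lambda>p. (Q p)\<^sup>2)"
    by (intro continuous_intros cw cP cQ)+
  have "continuous_on UNIV (\<lambda>t. (w (t, y))\<^sup>2)" "continuous_on UNIV (\<lambda>t. (w (y, t))\<^sup>2)" for y
    by (intro continuous_intros continuous_on_slices cw)+
  then have int_edge: "(\<lambda>t. (w (t, y))\<^sup>2) integrable_on {0..s}" "(\<lambda>t. (w (y, t))\<^sup>2) integrable_on {0..s}" for y
    by (auto intro: integrable_if_continuous_on_UNIV)
  have x_dir: "m * integral S (\<lambda>p. (w p)\<^sup>2)
      \<le> integral S (\<lambda>p. (P p)\<^sup>2) + \<alpha> * integral {0..s} (\<lambda>t. (w (0, t))\<^sup>2 + (w (s, t))\<^sup>2)"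
    unfolding m_def S_def using s \<alpha> dP cP cw by (intro robin_rectangle_x) auto
  have "((\<lambda>t. w (y, t)) has_real_derivative Q (y, x)) (at x)" for x y by (rule dQ)
  then have "m * integral S (\<lambda>p. (w (snd p, fst p))\<^sup>2)
      \<le> integral S (\<lambda>p. (Q (snd p, fst p))\<^sup>2) + \<alpha> * integral {0..s} (\<lambda>t. (w (t, 0))\<^sup>2 + (w (t, s))\<^sup>2)"
    unfolding m_def S_def
    using robin_rectangle_x[OF s _ \<alpha>, of s "\<lambda>p. w (snd p, fst p)" "\<lambda>p. Q (snd p, fst p)"]
      s swap[OF cQ] swap[OF cw] by simp
  then have y_dir: "m * integral S (\<lambda>p. (w p)\<^sup>2)
      \<le> integral S (\<lambda>p. (Q p)\<^sup>2) + \<alpha> * integral {0..s} (\<lambda>t. (w (t, 0))\<^sup>2 + (w (t, s))\<^sup>2)"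
    unfolding S_def using integral_rectangle_swap[OF cw2] integral_rectangle_swap[OF cQ2] by simp
  have "integral S (\<lambda>p. (P p)\<^sup>2 + (Q p)\<^sup>2) = integral S (\<lambda>p. (P p)\<^sup>2) + integral S (\<lambda>p. (Q p)\<^sup>2)"
    unfolding S_def using cP2 cQ2
    by (intro integral_add integrable_if_continuous_on_UNIV)
  moreover have "integral {0..s} (\<lambda>t. (w (t, 0))\<^sup>2 + (w (t, s))\<^sup>2 + (w (0, t))\<^sup>2 + (w (s, t))\<^sup>2)
      = integral {0..s} (\<lambda>t. (w (t, 0))\<^sup>2 + (w (t, s))\<^sup>2) + integral {0..s} (\<lambda>t. (w (0, t))\<^sup>2 + (w (s, t))\<^sup>2)"
    using int_edge by (subst integral_add[symmetric]) (auto simp: add.assoc intro!: integrable_add)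
  ultimately show ?thesis
    using x_dir y_dir unfolding m_def[symmetric] S_def[symmetric] by (simp add: algebra_simps)
qed

lemma robin_sq_cell:
  fixes v :: "pt \<Rightarrow> real" and i :: nat
  assumes v: "C1_fun v" and s: "s > 0" and \<alpha>: "\<alpha> > 0"
  defines "a \<equiv> 2 * real i * s"
  shows "2 * robin_interval_lower s \<alpha> * integral (sq_cell s i) (\<lambda>p. (v p)\<^sup>2)
          \<le> integral (sq_cell s i) (\<lambda>p. (partial_x v p)\<^sup>2 + (partial_y v p)\<^sup>2)
             + \<alpha> * integral {0..s} (\<lambda>t. (v (a + t, 0))\<^sup>2 + (v (a + t, s))\<^sup>2 + (v (a, t))\<^sup>2 + (v (a + s, t))\<^sup>2)"
proof -
  have shift: "continuous_on UNIV f \<Longrightarrow> continuous_on UNIV (\<lambda>p. f (p + (a, 0)))" for f :: "pt \<Rightarrow> real"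
    by (erule continuous_on_compose2) (auto intro!: continuous_intros)
  note cv = C1_fun_continuous[OF v]
  have "((\<lambda>t. v (t + a, y)) has_real_derivative partial_x v (x + a, y)) (at x)" for x y
    using DERIV_shift[of "\<lambda>t. v (t, y)" _ x a] C1_fun_has_partial_x[OF v, of y "x + a"] by simp
  moreover have "((\<lambda>t. v (x + a, t)) has_real_derivative partial_y v (x + a, y)) (at y)" for x y
    by (rule C1_fun_has_partial_y[OF v])
  ultimately have "2 * robin_interval_lower s \<alpha> * integral (cbox (0, 0) (s, s)) (\<lambda>p. (v (p + (a, 0)))\<^sup>2)
          \<le> integral (cbox (0, 0) (s, s))
               (\<lambda>p. (partial_x v (p + (a, 0)))\<^sup>2 + (partial_y v (p + (a, 0)))\<^sup>2)
             + \<alpha> * integral {0..s} (\<lambda>t. (v (t + a, 0))\<^sup>2 + (v (t + a, s))\<^sup>2 + (v (a, t))\<^sup>2 + (v (s + a, t))\<^sup>2)"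
    using robin_square[OF s \<alpha>, of "\<lambda>p. v (p + (a, 0))" "\<lambda>p. partial_x v (p + (a, 0))"
        "\<lambda>p. partial_y v (p + (a, 0))"] shift[OF cv(1)] shift[OF cv(2)] shift[OF cv(3)]
    by (simp add: case_prod_beta')
  then show ?thesis unfolding integral_sq_cell a_def by (simp add: add.commute)
qed

lemma robin_energy_lower_bound:
  fixes v :: "pt \<Rightarrow> real"
  assumes A: "A > 0" and k: "k \<ge> 1" and \<alpha>: "\<alpha> > 0" and v: "C1_fun v"
  shows "2 * robin_interval_lower (sq_side A k) \<alpha> * integral (S_union A k) (\<lambda>p. (v p)\<^sup>2)
          \<le> dirichlet (S_union A k) v + \<alpha> * S_bint A k (\<lambda>x. (v x)\<^sup>2)"
proof -
  define s where "s = sq_side A k"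
  have s: "s > 0" unfolding s_def using sq_side_pos[OF A k] .
  note cv = C1_fun_continuous[OF v]
  have "2 * robin_interval_lower s \<alpha> * integral (S_union A k) (\<lambda>p. (v p)\<^sup>2)
        = (\<Sum>i<k. 2 * robin_interval_lower s \<alpha> * integral (sq_cell s i) (\<lambda>p. (v p)\<^sup>2))"
    using cv A k by (simp add: integral_S_union s_def sum_distrib_left continuous_intros)
  also have "\<dots> \<le> (\<Sum>i<k. integral (sq_cell s i) (\<lambda>p. (partial_x v p)\<^sup>2 + (partial_y v p)\<^sup>2)
             + \<alpha> * integral {0..s} (\<lambda>t. (v (2 * real i * s + t, 0))\<^sup>2 + (v (2 * real i * s + t, s))\<^sup>2
                 + (v (2 * real i * s, t))\<^sup>2 + (v (2 * real i * s + s, t))\<^sup>2))"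
    by (intro sum_mono robin_sq_cell[OF v s \<alpha>])
  also have "\<dots> = dirichlet (S_union A k) v + \<alpha> * S_bint A k (\<lambda>x. (v x)\<^sup>2)"
    using cv A k
    by (simp add: dirichlet_eq_partials integral_S_union S_bint_def Let_def s_def sum.distrib
        sum_distrib_left continuous_intros)
  finally show ?thesis unfolding s_def .
qed

definition lincomb_sq_integral ::
    "'a::euclidean_space set \<Rightarrow> nat \<Rightarrow> (nat \<Rightarrow> 'a \<Rightarrow> real) \<Rightarrow> (nat \<Rightarrow> real) \<Rightarrow> real" where
  "lincomb_sq_integral T k g c = integral T (\<lambda>x. (\<Sum>i<k. c i * g i x)\<^sup>2)"

lemma continuous_on_lincomb_sq_integral:
  assumes "\<And>i j. i < k \<Longrightarrow> j < k \<Longrightarrow> (\<lambda>x. g i x * g j x) integrable_on T"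
  shows "continuous_on UNIV (lincomb_sq_integral T k g)"
proof -
  have "(\<lambda>x. (\<Sum>i<k. c i * g i x)\<^sup>2) = (\<lambda>x. \<Sum>i<k. \<Sum>j<k. (c i * c j) * (g i x * g j x))" for c
    by (auto simp: power2_eq_square sum_product algebra_simps)
  moreover have "integral T (\<lambda>x. \<Sum>i<k. \<Sum>j<k. (c i * c j) * (g i x * g j x))
      = (\<Sum>i<k. \<Sum>j<k. c i * c j * integral T (\<lambda>x. g i x * g j x))" for c
  proof -
    have "integral T (\<lambda>x. \<Sum>i<k. \<Sum>j<k. (c i * c j) * (g i x * g j x))
        = (\<Sum>i<k. integral T (\<lambda>x. \<Sum>j<k. (c i * c j) * (g i x * g j x)))"
      using assms by (intro integral_sum) (auto intro!: integrable_sum integrable_on_mult_right)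
    also have "\<dots> = (\<Sum>i<k. \<Sum>j<k. integral T (\<lambda>x. (c i * c j) * (g i x * g j x)))"
      using assms by (intro sum.cong refl integral_sum) (auto intro!: integrable_on_mult_right)
    finally show ?thesis by simp
  qed
  ultimately have "lincomb_sq_integral T k g c = (\<Sum>i<k. \<Sum>j<k. c i * c j * integral T (\<lambda>x. g i x * g j x))"
    for c unfolding lincomb_sq_integral_def by simp
  then show ?thesis by (auto intro!: continuous_intros continuous_on_product_coordinates)
qed

lemma lincomb_sq_integral_scale:
  "lincomb_sq_integral T k g (\<lambda>i. t * c i) = t\<^sup>2 * lincomb_sq_integral T k g c"
proof -
  have "(\<lambda>x. (\<Sum>i<k. t * c i * g i x)\<^sup>2) = (\<lambda>x. t\<^sup>2 * (\<Sum>i<k. c i * g i x)\<^sup>2)"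
    by (auto simp: power_mult_distrib sum_distrib_left[symmetric] mult.assoc)
  then show ?thesis unfolding lincomb_sq_integral_def by simp
qed

lemma lincomb_sq_integral_cong:
  "(\<And>i. i < k \<Longrightarrow> c i = c' i) \<Longrightarrow> lincomb_sq_integral T k g c = lincomb_sq_integral T k g c'"
  unfolding lincomb_sq_integral_def by (metis (no_types, lifting) lessThan_iff sum.cong)

lemma sum_power2_pos:
  fixes c :: "nat \<Rightarrow> real"
  assumes "\<exists>i<k. c i \<noteq> 0"
  shows "(\<Sum>i<k. (c i)\<^sup>2) > 0"
proof -
  obtain i where "i < k" "c i \<noteq> 0" using assms by blast
  then have "0 < (c i)\<^sup>2" "(c i)\<^sup>2 \<le> (\<Sum>j<k. (c j)\<^sup>2)" by (auto intro: member_le_sum)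
  then show ?thesis by linarith
qed

lemma compact_unit_sphere_coeffs:
  "compact {c::nat \<Rightarrow> real. (\<forall>i\<ge>k. c i = 0) \<and> (\<Sum>i<k. (c i)\<^sup>2) = 1}"
proof -
  define B where "B = PiE UNIV (\<lambda>i::nat. if i < k then {-1..1::real} else {0})"
  define K where "K = {c::nat \<Rightarrow> real. (\<forall>i\<ge>k. c i = 0) \<and> (\<Sum>i<k. (c i)\<^sup>2) = 1}"
  have "compactin (product_topology (\<lambda>i. euclidean) UNIV) B"
    unfolding B_def compactin_PiE by auto
  then have "compact B" unfolding euclidean_product_topology compactin_euclidean_iff .
  moreover have "K = (\<Inter>i\<in>{k..}. {c. c i = 0}) \<inter> {c. (\<Sum>i<k. (c i)\<^sup>2) = 1}"
    unfolding K_def by auto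
  then have "closed K"
    by (simp only:) (intro closed_Int closed_INT ballI closed_Collect_eq continuous_intros
        continuous_on_product_coordinates)
  moreover have "K \<subseteq> B"
  proof
    fix c assume c: "c \<in> K"
    have "\<bar>c i\<bar> \<le> 1" if "i < k" for i
    proof -
      have "(c i)\<^sup>2 \<le> (\<Sum>j<k. (c j)\<^sup>2)" using that by (intro member_le_sum) auto
      then show ?thesis using c abs_square_le_1 unfolding K_def by auto
    qed
    then show "c \<in> B" using c unfolding B_def K_def by (auto simp: abs_le_iff)
  qed
  ultimately show ?thesis unfolding K_def[symmetric] by (metis compact_Int_closed inf.absorb_iff2)
qed

text \<open>By homogeneity it suffices to bound the quotient on the compact unit sphere.\<close>
lemma bdd_above_quadratic_quotient:
  fixes N D :: "(nat \<Rightarrow> real) \<Rightarrow> real"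
  assumes cont: "continuous_on UNIV N" "continuous_on UNIV D"
    and scale: "\<And>t c. N (\<lambda>i. t * c i) = t\<^sup>2 * N c" "\<And>t c. D (\<lambda>i. t * c i) = t\<^sup>2 * D c"
    and cong: "\<And>c c'. (\<And>i. i < k \<Longrightarrow> c i = c' i) \<Longrightarrow> N c = N c'"
              "\<And>c c'. (\<And>i. i < k \<Longrightarrow> c i = c' i) \<Longrightarrow> D c = D c'"
    and pos: "\<And>c. \<exists>i<k. c i \<noteq> 0 \<Longrightarrow> D c > 0"
  shows "bdd_above {N c / D c | c. \<exists>i<k. c i \<noteq> 0}"
proof -
  define K where "K = {c::nat \<Rightarrow> real. (\<forall>i\<ge>k. c i = 0) \<and> (\<Sum>i<k. (c i)\<^sup>2) = 1}"
  have K_nonzero: "\<exists>i<k. c i \<noteq> 0" if "c \<in> K" for c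
  proof (rule ccontr)
    assume "\<not> (\<exists>i<k. c i \<noteq> 0)"
    then have "(\<Sum>i<k. (c i)\<^sup>2) = 0" by simp
    then show False using that unfolding K_def by simp
  qed
  have "continuous_on K (\<lambda>c. N c / D c)"
    using pos[OF K_nonzero]
    by (intro continuous_intros continuous_on_subset[OF cont(1)] continuous_on_subset[OF cont(2)])
      force+
  then have "bdd_above ((\<lambda>c. N c / D c) ` K)"
    using compact_unit_sphere_coeffs[of k, folded K_def]
    by (intro bounded_imp_bdd_above compact_imp_bounded compact_continuous_image)
  moreover have "{N c / D c | c. \<exists>i<k. c i \<noteq> 0} \<subseteq> (\<lambda>c. N c / D c) ` K"
  proof clarify
    fix c :: "nat \<Rightarrow> real" and i assume c: "i < k" "c i \<noteq> 0"
    define r where "r = sqrt (\<Sum>j<k. (c j)\<^sup>2)"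
    have sp: "(\<Sum>j<k. (c j)\<^sup>2) > 0" using c by (intro sum_power2_pos) auto
    then have r: "r > 0" "r\<^sup>2 = (\<Sum>j<k. (c j)\<^sup>2)" unfolding r_def by auto
    define c' where "c' = (\<lambda>j. if j < k then c j / r else 0)"
    have "(\<Sum>j<k. (c' j)\<^sup>2) = (\<Sum>j<k. (c j)\<^sup>2) / r\<^sup>2"
      unfolding c'_def by (simp add: power_divide sum_divide_distrib)
    then have "c' \<in> K" using r sp unfolding K_def c'_def by auto
    moreover have "N c' = (1/r)\<^sup>2 * N c" "D c' = (1/r)\<^sup>2 * D c"
      using cong[of c' "\<lambda>j. (1/r) * c j"] scale[of "1/r" c] by (simp_all add: c'_def)
    ultimately show "N c / D c \<in> (\<lambda>c. N c / D c) ` K"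
      using r by (intro rev_image_eqI[of c']) (simp_all add: mult_divide_mult_cancel_left)
  qed
  ultimately show ?thesis by (rule bdd_above_mono)
qed

definition robin_energy :: "pt set \<Rightarrow> ((pt \<Rightarrow> real) \<Rightarrow> real) \<Rightarrow> real \<Rightarrow> (pt \<Rightarrow> real) \<Rightarrow> real" where
  "robin_energy \<Omega> bint \<alpha> v = dirichlet \<Omega> v + \<alpha> * bint (\<lambda>x. (v x)\<^sup>2)"

lemma robin_rayleigh_eq:
  "robin_rayleigh \<Omega> bint \<alpha> v = robin_energy \<Omega> bint \<alpha> v / integral \<Omega> (\<lambda>x. (v x)\<^sup>2)"
  unfolding robin_rayleigh_def robin_energy_def ..

text \<open>This representation gives continuity and homogeneity of the energy in \<open>c\<close>.\<close>
lemma robin_energy_S_lincomb: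
  assumes A: "A > 0" and k: "k \<ge> 1" and u: "\<forall>i<k. C1_fun (u i)"
  defines "s \<equiv> sq_side A k"
  shows "robin_energy (S_union A k) (S_bint A k) \<alpha> (\<lambda>x. \<Sum>i<k. c i * u i x)
    = lincomb_sq_integral (S_union A k) k (\<lambda>i. partial_x (u i)) c
      + lincomb_sq_integral (S_union A k) k (\<lambda>i. partial_y (u i)) c
      + \<alpha> * (\<Sum>j<k. lincomb_sq_integral {0..s} k (\<lambda>i t. u i (2 * real j * s + t, 0)) c
          + lincomb_sq_integral {0..s} k (\<lambda>i t. u i (2 * real j * s + t, s)) c
          + lincomb_sq_integral {0..s} k (\<lambda>i t. u i (2 * real j * s, t)) c
          + lincomb_sq_integral {0..s} k (\<lambda>i t. u i (2 * real j * s + s, t)) c)"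
proof -
  have cu: "continuous_on UNIV (u i)" "continuous_on UNIV (partial_x (u i))"
    "continuous_on UNIV (partial_y (u i))" if "i < k" for i
    using u that C1_fun_continuous by blast+
  have "continuous_on UNIV (\<lambda>p. (\<Sum>i<k. c i * partial_x (u i) p)\<^sup>2)"
    "continuous_on UNIV (\<lambda>p. (\<Sum>i<k. c i * partial_y (u i) p)\<^sup>2)"
    using cu by (auto intro!: continuous_intros)
  then have dir: "dirichlet (S_union A k) (\<lambda>x. \<Sum>i<k. c i * u i x)
      = lincomb_sq_integral (S_union A k) k (\<lambda>i. partial_x (u i)) c
        + lincomb_sq_integral (S_union A k) k (\<lambda>i. partial_y (u i)) c"
    unfolding dirichlet_eq_partials C1_fun_lincomb(2,3)[OF u] lincomb_sq_integral_def
    by (intro integral_add integrable_on_S_union A k)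
  have cb: "continuous_on UNIV (\<lambda>t. (\<Sum>i<k. c i * u i (a + t, b))\<^sup>2)"
    "continuous_on UNIV (\<lambda>t. (\<Sum>i<k. c i * u i (a, t))\<^sup>2)" for a b
    using cu by (auto intro!: continuous_intros continuous_on_slices)
  have "S_bint A k (\<lambda>x. (\<Sum>i<k. c i * u i x)\<^sup>2)
      = (\<Sum>j<k. lincomb_sq_integral {0..s} k (\<lambda>i t. u i (2 * real j * s + t, 0)) c
          + lincomb_sq_integral {0..s} k (\<lambda>i t. u i (2 * real j * s + t, s)) c
          + lincomb_sq_integral {0..s} k (\<lambda>i t. u i (2 * real j * s, t)) c
          + lincomb_sq_integral {0..s} k (\<lambda>i t. u i (2 * real j * s + s, t)) c)"
    unfolding S_bint_def Let_def s_def[symmetric] lincomb_sq_integral_def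
    by (intro sum.cong refl,
        (subst integral_add; (intro integrable_add integrable_if_continuous_on_UNIV cb)?)+, simp)
  with dir show ?thesis unfolding robin_energy_def by simp
qed

section \<open>The min-max characterisation\<close>

definition minmax_admissible :: "pt set \<Rightarrow> nat \<Rightarrow> (nat \<Rightarrow> pt \<Rightarrow> real) \<Rightarrow> bool" where
  "minmax_admissible \<Omega> k u \<longleftrightarrow> (\<forall>i<k. C1_fun (u i)) \<and>
     (\<forall>c. integral \<Omega> (\<lambda>x. (\<Sum>i<k. c i * u i x)\<^sup>2) = 0 \<longrightarrow> (\<forall>i<k. c i = 0))"

definition robin_quotients ::
    "pt set \<Rightarrow> ((pt \<Rightarrow> real) \<Rightarrow> real) \<Rightarrow> real \<Rightarrow> nat \<Rightarrow> (nat \<Rightarrow> pt \<Rightarrow> real) \<Rightarrow> real set" where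
  "robin_quotients \<Omega> bint \<alpha> k u =
     {robin_rayleigh \<Omega> bint \<alpha> (\<lambda>x. \<Sum>i<k. c i * u i x) | c. \<exists>i<k. c i \<noteq> 0}"

lemma robin_eig_eq_Inf:
  "robin_eig \<Omega> bint \<alpha> k = Inf {Sup (robin_quotients \<Omega> bint \<alpha> k u) | u. minmax_admissible \<Omega> k u}"
  unfolding robin_eig_def robin_quotients_def minmax_admissible_def ..

text \<open>In the real numbers \<open>Sup\<close> and \<open>Inf\<close> of unbounded sets are junk values, so the lower bound
  needs the quotients of every admissible family to be bounded above.\<close>
lemma robin_eig_bounds:
  assumes k: "k \<ge> 1"
    and lower: "\<And>u. minmax_admissible \<Omega> k u \<Longrightarrow>
      bdd_above (robin_quotients \<Omega> bint \<alpha> k u) \<and> (\<forall>r \<in> robin_quotients \<Omega> bint \<alpha> k u. m \<le> r)"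
    and u\<^sub>0: "minmax_admissible \<Omega> k u\<^sub>0"
    and upper: "\<And>r. r \<in> robin_quotients \<Omega> bint \<alpha> k u\<^sub>0 \<Longrightarrow> r \<le> M"
  shows "m \<le> robin_eig \<Omega> bint \<alpha> k \<and> robin_eig \<Omega> bint \<alpha> k \<le> M"
proof -
  define E where "E = {Sup (robin_quotients \<Omega> bint \<alpha> k u) | u. minmax_admissible \<Omega> k u}"
  have ne: "robin_quotients \<Omega> bint \<alpha> k u \<noteq> {}" for u
    using k unfolding robin_quotients_def by (auto intro!: exI[of _ "\<lambda>i. 1"] exI[of _ 0])
  have E_lower: "m \<le> e" if "e \<in> E" for e
    using that lower ne unfolding E_def by (fastforce intro: cSup_upper2)
  have "m \<le> Inf E"
    using u\<^sub>0 E_lower unfolding E_def by (intro cInf_greatest) auto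
  moreover have "Inf E \<le> Sup (robin_quotients \<Omega> bint \<alpha> k u\<^sub>0)"
    using u\<^sub>0 E_lower unfolding E_def by (intro cInf_lower) (auto simp: bdd_below_def)
  moreover have "Sup (robin_quotients \<Omega> bint \<alpha> k u\<^sub>0) \<le> M"
    using ne upper by (intro cSup_least) auto
  ultimately show ?thesis unfolding robin_eig_eq_Inf E_def[symmetric] by linarith
qed

section \<open>The lower bound\<close>

lemma lincomb_sq_integral_S_pos:
  assumes A: "A > 0" and k: "k \<ge> 1" and u: "minmax_admissible (S_union A k) k u"
    and c: "\<exists>i<k. c i \<noteq> 0"
  shows "lincomb_sq_integral (S_union A k) k u c > 0"
proof -
  have "continuous_on UNIV (\<lambda>x. (\<Sum>i<k. c i * u i x)\<^sup>2)"
    using u by (auto intro!: continuous_intros simp: minmax_admissible_def C1_fun_continuous)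
  then have "lincomb_sq_integral (S_union A k) k u c \<ge> 0"
    unfolding lincomb_sq_integral_def using A k by (intro integral_nonneg integrable_on_S_union) auto
  moreover have "lincomb_sq_integral (S_union A k) k u c \<noteq> 0"
    using u c unfolding minmax_admissible_def lincomb_sq_integral_def by blast
  ultimately show ?thesis by simp
qed

lemma bdd_above_robin_quotients_S:
  assumes A: "A > 0" and k: "k \<ge> 1" and u: "minmax_admissible (S_union A k) k u"
  shows "bdd_above (robin_quotients (S_union A k) (S_bint A k) \<alpha> k u)"
proof -
  define N where "N = (\<lambda>c. robin_energy (S_union A k) (S_bint A k) \<alpha> (\<lambda>x. \<Sum>i<k. c i * u i x))"
  define D where "D = lincomb_sq_integral (S_union A k) k u"
  have uC1: "\<forall>i<k. C1_fun (u i)" using u unfolding minmax_admissible_def by blast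
  note N_eq = robin_energy_S_lincomb[OF A k uC1]
  have cu: "continuous_on UNIV (u i)" "continuous_on UNIV (partial_x (u i))"
    "continuous_on UNIV (partial_y (u i))" if "i < k" for i
    using uC1 that C1_fun_continuous by blast+
  have prod_int_S: "(\<lambda>x. g x * h x) integrable_on S_union A k"
    if "continuous_on UNIV g" "continuous_on UNIV h" for g h :: "pt \<Rightarrow> real"
    using that A k by (intro integrable_on_S_union continuous_intros)
  have prod_int_I: "(\<lambda>t. g t * h t) integrable_on {0..sq_side A k}"
    if "continuous_on UNIV g" "continuous_on UNIV h" for g h :: "real \<Rightarrow> real"
    using that by (intro integrable_if_continuous_on_UNIV continuous_intros)
  have "bdd_above {N c / D c | c. \<exists>i<k. c i \<noteq> 0}"
  proof (rule bdd_above_quadratic_quotient)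
    show "continuous_on UNIV N"
      unfolding N_def N_eq using cu
      by (intro continuous_intros continuous_on_lincomb_sq_integral prod_int_S prod_int_I
          continuous_on_slices; simp)
    show "continuous_on UNIV D"
      unfolding D_def using cu by (intro continuous_on_lincomb_sq_integral prod_int_S; simp)
    show "N (\<lambda>i. t * c i) = t\<^sup>2 * N c" for t c
      unfolding N_def N_eq lincomb_sq_integral_scale by (simp add: algebra_simps sum_distrib_left)
    show "D (\<lambda>i. t * c i) = t\<^sup>2 * D c" for t c
      unfolding D_def by (rule lincomb_sq_integral_scale)
    show "N c = N c'" if "\<And>i. i < k \<Longrightarrow> c i = c' i" for c c'
      unfolding N_def N_eq using that by (simp add: lincomb_sq_integral_cong[of k c c'])
    show "D c = D c'" if "\<And>i. i < k \<Longrightarrow> c i = c' i" for c c'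
      unfolding D_def using that by (rule lincomb_sq_integral_cong)
    show "D c > 0" if "\<exists>i<k. c i \<noteq> 0" for c
      unfolding D_def using lincomb_sq_integral_S_pos[OF A k u that] .
  qed
  then show ?thesis
    unfolding robin_quotients_def robin_rayleigh_eq N_def D_def lincomb_sq_integral_def .
qed

lemma robin_quotients_S_lower:
  assumes A: "A > 0" and k: "k \<ge> 1" and \<alpha>: "\<alpha> > 0" and u: "minmax_admissible (S_union A k) k u"
    and r: "r \<in> robin_quotients (S_union A k) (S_bint A k) \<alpha> k u"
  shows "2 * robin_interval_lower (sq_side A k) \<alpha> \<le> r"
proof -
  obtain c where c: "\<exists>i<k. c i \<noteq> 0"
    and r: "r = robin_rayleigh (S_union A k) (S_bint A k) \<alpha> (\<lambda>x. \<Sum>i<k. c i * u i x)"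
    using r unfolding robin_quotients_def by blast
  have "\<forall>i<k. C1_fun (u i)" using u unfolding minmax_admissible_def by blast
  then have "2 * robin_interval_lower (sq_side A k) \<alpha> * lincomb_sq_integral (S_union A k) k u c
      \<le> robin_energy (S_union A k) (S_bint A k) \<alpha> (\<lambda>x. \<Sum>i<k. c i * u i x)"
    using robin_energy_lower_bound[OF A k \<alpha> C1_fun_lincomb(1)]
    unfolding lincomb_sq_integral_def robin_energy_def by blast
  with lincomb_sq_integral_S_pos[OF A k u c] show ?thesis
    unfolding r robin_rayleigh_eq lincomb_sq_integral_def by (simp add: pos_le_divide_eq)
qed

section \<open>The upper bound\<close>

lemma has_real_derivative_pos_part_sq:
  "((\<lambda>t::real. (max 0 t)\<^sup>2) has_real_derivative 2 * max 0 t) (at t)"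
proof -
  consider "t = 0" | "t > 0" | "t < 0" by linarith
  then show ?thesis
  proof cases
    case 1
    have "(\<lambda>h::real. max 0 h) \<midarrow>0\<rightarrow> max 0 0" by (intro tendsto_intros)
    then have "(\<lambda>h::real. max 0 h) \<midarrow>0\<rightarrow> 0" by simp
    moreover have "max 0 h = ((max 0 (0 + h))\<^sup>2 - (max 0 0)\<^sup>2) / h" if "h \<noteq> 0" for h :: real
      using that by (auto simp: max_def power2_eq_square)
    ultimately have "(\<lambda>h::real. ((max 0 (0 + h))\<^sup>2 - (max 0 0)\<^sup>2) / h) \<midarrow>0\<rightarrow> 0"
      using LIM_cong[of 0 0 "\<lambda>h. max 0 h" "\<lambda>h. ((max 0 (0 + h))\<^sup>2 - (max 0 0)\<^sup>2) / h" 0 0]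
      by blast
    then show ?thesis using 1 by (simp add: DERIV_def)
  next
    case 2
    have "((\<lambda>t::real. t\<^sup>2) has_real_derivative 2 * max 0 t) (at t)"
      using 2 by (auto intro!: derivative_eq_intros)
    then show ?thesis
      by (rule has_field_derivative_transform_within_open[where S="{0<..}"]) (use 2 in auto)
  next
    case 3
    have "((\<lambda>t::real. 0) has_real_derivative 2 * max 0 t) (at t)" using 3 by simp
    then show ?thesis
      by (rule has_field_derivative_transform_within_open[where S="{..<0}"]) (use 3 in auto)
  qed
qed

definition c1_step :: "real \<Rightarrow> real" where
  "c1_step t = 2 * (max 0 t)\<^sup>2 - 4 * (max 0 (t - 1/2))\<^sup>2 + 2 * (max 0 (t - 1))\<^sup>2"

definition c1_step' :: "real \<Rightarrow> real" where
  "c1_step' t = 4 * max 0 t - 8 * max 0 (t - 1/2) + 4 * max 0 (t - 1)"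

lemma c1_step_has_derivative: "(c1_step has_real_derivative c1_step' t) (at t)"
proof -
  have shifted: "((\<lambda>t. (max 0 (t - a))\<^sup>2) has_real_derivative 2 * max 0 (t - a)) (at t)" for a
    using DERIV_shift[of "\<lambda>t. (max 0 t)\<^sup>2" "2 * max 0 (t - a)" t "- a"]
      has_real_derivative_pos_part_sq[of "t - a"] by simp
  have "((\<lambda>t. 2 * (max 0 t)\<^sup>2 - 4 * (max 0 (t - 1/2))\<^sup>2 + 2 * (max 0 (t - 1))\<^sup>2) has_real_derivative
        2 * (2 * max 0 t) - 4 * (2 * max 0 (t - 1/2)) + 2 * (2 * max 0 (t - 1))) (at t)"
    by (intro DERIV_add DERIV_diff DERIV_cmult has_real_derivative_pos_part_sq shifted)
  then show ?thesis unfolding c1_step_def[abs_def] c1_step'_def by simp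
qed

lemma continuous_on_c1_step': "continuous_on UNIV c1_step'"
  unfolding c1_step'_def[abs_def] by (intro continuous_intros)

lemma c1_step_le_0: "t \<le> 0 \<Longrightarrow> c1_step t = 0 \<and> c1_step' t = 0"
  unfolding c1_step_def c1_step'_def by (auto simp: max_def)

lemma c1_step_ge_1: "t \<ge> 1 \<Longrightarrow> c1_step t = 1 \<and> c1_step' t = 0"
  unfolding c1_step_def c1_step'_def by (auto simp: max_def power2_eq_square algebra_simps)

text \<open>A \<open>C\<^sup>1\<close> cut-off in the first coordinate, equal to \<open>1\<close> on a neighbourhood of the \<open>j\<close>-th square
  of side \<open>s\<close> and vanishing on all the others.\<close>
definition cell_cutoff :: "real \<Rightarrow> nat \<Rightarrow> real \<Rightarrow> real" where
  "cell_cutoff s j x =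
     c1_step ((x - 2 * real j * s + 3 * s / 4) * (2 / s)) * c1_step ((2 * real j * s + 7 * s / 4 - x) * (2 / s))"

definition cell_cutoff' :: "real \<Rightarrow> nat \<Rightarrow> real \<Rightarrow> real" where
  "cell_cutoff' s j x =
     c1_step' ((x - 2 * real j * s + 3 * s / 4) * (2 / s)) * (2 / s) * c1_step ((2 * real j * s + 7 * s / 4 - x) * (2 / s))
     + c1_step' ((2 * real j * s + 7 * s / 4 - x) * (2 / s)) * (- 2 / s) * c1_step ((x - 2 * real j * s + 3 * s / 4) * (2 / s))"

lemma cell_cutoff_has_derivative: "(cell_cutoff s j has_real_derivative cell_cutoff' s j x) (at x)"
proof -
  have affine: "((\<lambda>x. (x - a) * b) has_real_derivative b) (at x)"
    "((\<lambda>x. (a - x) * b) has_real_derivative - b) (at x)" for a b :: real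
    by (auto intro!: derivative_eq_intros)
  have "((\<lambda>x. c1_step ((x - 2 * real j * s + 3 * s / 4) * (2 / s))) has_real_derivative
      c1_step' ((x - 2 * real j * s + 3 * s / 4) * (2 / s)) * (2 / s)) (at x)"
    using DERIV_chain2[OF c1_step_has_derivative affine(1)[of "2 * real j * s - 3 * s / 4" "2 / s"]]
    by (simp add: algebra_simps)
  moreover have "((\<lambda>x. c1_step ((2 * real j * s + 7 * s / 4 - x) * (2 / s))) has_real_derivative
      c1_step' ((2 * real j * s + 7 * s / 4 - x) * (2 / s)) * (- 2 / s)) (at x)"
    using DERIV_chain2[OF c1_step_has_derivative affine(2)[of "2 * real j * s + 7 * s / 4" "2 / s"]]
    by simp
  ultimately show ?thesis unfolding cell_cutoff_def[abs_def] cell_cutoff'_def by (rule DERIV_mult)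
qed

lemma continuous_on_cell_cutoff': "continuous_on UNIV (cell_cutoff' s j)"
proof -
  have c: "continuous_on UNIV c1_step"
    using c1_step_has_derivative by (rule has_real_derivative_imp_continuous_on)
  show ?thesis unfolding cell_cutoff'_def[abs_def]
    by (intro continuous_intros continuous_on_UNIV_comp[OF continuous_on_c1_step']
        continuous_on_UNIV_comp[OF c])
qed

lemma cell_cutoff_on_sq_cell:
  assumes s: "s > 0" and x: "2 * real i * s \<le> x" "x \<le> 2 * real i * s + s"
  shows "cell_cutoff s j x = (if j = i then 1 else 0) \<and> cell_cutoff' s j x = 0"
proof -
  consider "j = i" | "real j + 1 \<le> real i" | "real i + 1 \<le> real j" by linarith
  then show ?thesis
  proof cases
    case 1
    then have "(x - 2 * real j * s + 3 * s / 4) * (2 / s) \<ge> 1" "(2 * real j * s + 7 * s / 4 - x) * (2 / s) \<ge> 1"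
      using s x by (simp_all add: field_simps)
    then show ?thesis using 1 unfolding cell_cutoff_def cell_cutoff'_def by (simp add: c1_step_ge_1)
  next
    case 2
    then have "(real j + 1) * (2 * s) \<le> real i * (2 * s)" using s by (intro mult_right_mono) auto
    then have "(2 * real j * s + 7 * s / 4 - x) * (2 / s) \<le> 0" using s x by (simp add: field_simps)
    then show ?thesis using 2 unfolding cell_cutoff_def cell_cutoff'_def by (auto simp: c1_step_le_0)
  next
    case 3
    then have "(real i + 1) * (2 * s) \<le> real j * (2 * s)" using s by (intro mult_right_mono) auto
    then have "(x - 2 * real j * s + 3 * s / 4) * (2 / s) \<le> 0" using s x by (simp add: field_simps)
    then show ?thesis using 3 unfolding cell_cutoff_def cell_cutoff'_def by (auto simp: c1_step_le_0)
  qed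
qed

text \<open>On the \<open>j\<close>-th square this is \<open>f(x - 2 j s) f(y)\<close>, a translate of the product test function
  \<open>f \<otimes> f\<close> on \<open>[0, s]\<^sup>2\<close>; on all other squares it vanishes.\<close>
definition cell_test_fun :: "real \<Rightarrow> (real \<Rightarrow> real) \<Rightarrow> nat \<Rightarrow> pt \<Rightarrow> real" where
  "cell_test_fun s f j p = cell_cutoff s j (fst p) * f (fst p - 2 * real j * s) * f (snd p)"

lemma cell_test_fun_C1:
  assumes df: "\<And>t. (f has_real_derivative f' t) (at t)" and cf': "continuous_on UNIV f'"
  shows "C1_fun (cell_test_fun s f j)"
    and "partial_x (cell_test_fun s f j) = (\<lambda>p. (cell_cutoff' s j (fst p) * f (fst p - 2 * real j * s)
           + cell_cutoff s j (fst p) * f' (fst p - 2 * real j * s)) * f (snd p))"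
    and "partial_y (cell_test_fun s f j) =
           (\<lambda>p. cell_cutoff s j (fst p) * f (fst p - 2 * real j * s) * f' (snd p))"
proof -
  define X where "X = (\<lambda>x. cell_cutoff s j x * f (x - 2 * real j * s))"
  define X' where "X' = (\<lambda>x. cell_cutoff' s j x * f (x - 2 * real j * s)
                              + cell_cutoff s j x * f' (x - 2 * real j * s))"
  have "((\<lambda>x. f (x - 2 * real j * s)) has_real_derivative f' (x - 2 * real j * s)) (at x)" for x
    using DERIV_shift[of f "f' (x - 2 * real j * s)" x "- (2 * real j * s)"] df by simp
  then have dX: "(X has_real_derivative X' x) (at x)" for x
    unfolding X_def X'_def by (auto intro!: derivative_eq_intros cell_cutoff_has_derivative)
  have cf: "continuous_on UNIV f" using df by (rule has_real_derivative_imp_continuous_on)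
  have "continuous_on UNIV (cell_cutoff s j)"
    using cell_cutoff_has_derivative by (rule has_real_derivative_imp_continuous_on)
  then have cX': "continuous_on UNIV X'"
    unfolding X'_def
    by (intro continuous_intros continuous_on_cell_cutoff' continuous_on_UNIV_comp[OF cf']
        continuous_on_UNIV_comp[OF cf])
  have u: "cell_test_fun s f j = (\<lambda>p. X (fst p) * f (snd p))"
    unfolding cell_test_fun_def X_def by auto
  show "C1_fun (cell_test_fun s f j)"
    unfolding u by (rule C1_fun_tensor(1)[OF dX df cX' cf'])
  have "partial_x (cell_test_fun s f j) = (\<lambda>p. X' (fst p) * f (snd p))"
    unfolding u by (rule C1_fun_tensor(2)[OF dX df cX' cf'])
  then show "partial_x (cell_test_fun s f j) = (\<lambda>p. (cell_cutoff' s j (fst p) * f (fst p - 2 * real j * s)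
           + cell_cutoff s j (fst p) * f' (fst p - 2 * real j * s)) * f (snd p))"
    by (simp add: X'_def)
  have "partial_y (cell_test_fun s f j) = (\<lambda>p. X (fst p) * f' (snd p))"
    unfolding u by (rule C1_fun_tensor(3)[OF dX df cX' cf'])
  then show "partial_y (cell_test_fun s f j) =
           (\<lambda>p. cell_cutoff s j (fst p) * f (fst p - 2 * real j * s) * f' (snd p))"
    by (simp add: X_def)
qed

lemma cell_test_lincomb_on_sq_cell:
  assumes s: "s > 0" and df: "\<And>t. (f has_real_derivative f' t) (at t)" and cf': "continuous_on UNIV f'"
    and i: "i < k" and x: "2 * real i * s \<le> x" "x \<le> 2 * real i * s + s"
  shows "(\<Sum>j<k. c j * cell_test_fun s f j (x, y)) = c i * (f (x - 2 * real i * s) * f y)"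
    and "(\<Sum>j<k. c j * partial_x (cell_test_fun s f j) (x, y)) = c i * (f' (x - 2 * real i * s) * f y)"
    and "(\<Sum>j<k. c j * partial_y (cell_test_fun s f j) (x, y)) = c i * (f (x - 2 * real i * s) * f' y)"
proof -
  have delta: "(\<Sum>j<k. c j * (if j = i then X else 0)) = c i * X" for X :: real
    using i by (simp add: if_distrib[of "(*) _"] cong: if_cong)
  note cutoff = cell_cutoff_on_sq_cell[OF s x]
  show "(\<Sum>j<k. c j * cell_test_fun s f j (x, y)) = c i * (f (x - 2 * real i * s) * f y)"
    using delta[of "f (x - 2 * real i * s) * f y"] cutoff
    by (simp add: cell_test_fun_def if_distrib[of "\<lambda>a. a * _"] cong: if_cong)
  show "(\<Sum>j<k. c j * partial_x (cell_test_fun s f j) (x, y)) = c i * (f' (x - 2 * real i * s) * f y)"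
    using delta[of "f' (x - 2 * real i * s) * f y"] cutoff
    by (simp add: cell_test_fun_C1(2)[OF df cf'] if_distrib[of "\<lambda>a. a * _"] cong: if_cong)
  show "(\<Sum>j<k. c j * partial_y (cell_test_fun s f j) (x, y)) = c i * (f (x - 2 * real i * s) * f' y)"
    using delta[of "f (x - 2 * real i * s) * f' y"] cutoff
    by (simp add: cell_test_fun_C1(3)[OF df cf'] if_distrib[of "\<lambda>a. a * _"] cong: if_cong)
qed

lemma cell_test_lincomb_on_translate:
  fixes c :: "nat \<Rightarrow> real"
  assumes s: "s > 0" and df: "\<And>t. (f has_real_derivative f' t) (at t)" and cf': "continuous_on UNIV f'"
    and i: "i < k" and p: "p \<in> cbox (0, 0) (s, s)"
  defines "v \<equiv> \<lambda>x. \<Sum>j<k. c j * cell_test_fun s f j x"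
  shows "v (p + (2 * real i * s, 0)) = c i * (f (fst p) * f (snd p))"
    and "partial_x v (p + (2 * real i * s, 0)) = c i * (f' (fst p) * f (snd p))"
    and "partial_y v (p + (2 * real i * s, 0)) = c i * (f (fst p) * f' (snd p))"
proof -
  have u: "\<forall>j<k. C1_fun (cell_test_fun s f j)" using cell_test_fun_C1(1)[OF df cf'] by blast
  obtain x y where p_eq: "p = (x, y)" by (cases p)
  then have x: "2 * real i * s \<le> x + 2 * real i * s" "x + 2 * real i * s \<le> 2 * real i * s + s"
    using p by (auto simp: cbox_Pair_iff)
  note on_cell = cell_test_lincomb_on_sq_cell[OF s df cf' i x, of c y]
  show "v (p + (2 * real i * s, 0)) = c i * (f (fst p) * f (snd p))"
    using on_cell(1) unfolding v_def p_eq by simp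
  show "partial_x v (p + (2 * real i * s, 0)) = c i * (f' (fst p) * f (snd p))"
    using on_cell(2) unfolding v_def p_eq C1_fun_lincomb(2)[OF u] by simp
  show "partial_y v (p + (2 * real i * s, 0)) = c i * (f (fst p) * f' (snd p))"
    using on_cell(3) unfolding v_def p_eq C1_fun_lincomb(3)[OF u] by simp
qed

lemma integral_S_cell_test_lincomb:
  assumes A: "A > 0" and k: "k \<ge> 1"
    and df: "\<And>t. (f has_real_derivative f' t) (at t)" and cf': "continuous_on UNIV f'"
  defines "s \<equiv> sq_side A k"
  shows "integral (S_union A k) (\<lambda>x. (\<Sum>j<k. c j * cell_test_fun s f j x)\<^sup>2)
           = (\<Sum>i<k. (c i)\<^sup>2) * (integral {0..s} (\<lambda>t. (f t)\<^sup>2))\<^sup>2"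
proof -
  have s: "s > 0" unfolding s_def using sq_side_pos[OF A k] .
  have u: "\<forall>j<k. C1_fun (cell_test_fun s f j)" using cell_test_fun_C1(1)[OF df cf'] by blast
  have cf2: "continuous_on UNIV (\<lambda>t. (f t)\<^sup>2)"
    using has_real_derivative_imp_continuous_on[OF df] by (intro continuous_intros)
  have "continuous_on UNIV (\<lambda>x. (\<Sum>j<k. c j * cell_test_fun s f j x)\<^sup>2)"
    using C1_fun_continuous(1)[OF C1_fun_lincomb(1)[OF u]] by (rule continuous_on_power)
  then have "integral (S_union A k) (\<lambda>x. (\<Sum>j<k. c j * cell_test_fun s f j x)\<^sup>2)
      = (\<Sum>i<k. integral (cbox (0, 0) (s, s)) (\<lambda>p. (\<Sum>j<k. c j * cell_test_fun s f j (p + (2 * real i * s, 0)))\<^sup>2))"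
    using A k by (simp add: integral_S_union integral_sq_cell s_def)
  also have "\<dots> = (\<Sum>i<k. (c i)\<^sup>2 * (integral {0..s} (\<lambda>t. (f t)\<^sup>2))\<^sup>2)"
  proof (rule sum.cong[OF refl])
    fix i assume "i \<in> {..<k}"
    then have "integral (cbox (0, 0) (s, s)) (\<lambda>p. (\<Sum>j<k. c j * cell_test_fun s f j (p + (2 * real i * s, 0)))\<^sup>2)
        = integral (cbox (0, 0) (s, s)) (\<lambda>p. (c i)\<^sup>2 * ((f (fst p))\<^sup>2 * (f (snd p))\<^sup>2))"
      using cell_test_lincomb_on_translate(1)[OF s df cf'] by (intro integral_cong) (auto simp: power_mult_distrib)
    also have "\<dots> = (c i)\<^sup>2 * (integral {0..s} (\<lambda>t. (f t)\<^sup>2))\<^sup>2"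
      using integral_separable[OF cf2 cf2, of 0 0 s s] by (simp add: power2_eq_square)
    finally show "integral (cbox (0, 0) (s, s)) (\<lambda>p. (\<Sum>j<k. c j * cell_test_fun s f j (p + (2 * real i * s, 0)))\<^sup>2)
        = (c i)\<^sup>2 * (integral {0..s} (\<lambda>t. (f t)\<^sup>2))\<^sup>2" .
  qed
  finally show ?thesis by (simp add: sum_distrib_right)
qed

lemma dirichlet_S_cell_test_lincomb:
  assumes A: "A > 0" and k: "k \<ge> 1"
    and df: "\<And>t. (f has_real_derivative f' t) (at t)" and cf': "continuous_on UNIV f'"
  defines "s \<equiv> sq_side A k"
  shows "dirichlet (S_union A k) (\<lambda>x. \<Sum>j<k. c j * cell_test_fun s f j x)
           = (\<Sum>i<k. (c i)\<^sup>2) * (2 * integral {0..s} (\<lambda>t. (f' t)\<^sup>2) * integral {0..s} (\<lambda>t. (f t)\<^sup>2))"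
proof -
  define v where "v = (\<lambda>x. \<Sum>j<k. c j * cell_test_fun s f j x)"
  have s: "s > 0" unfolding s_def using sq_side_pos[OF A k] .
  have "\<forall>j<k. C1_fun (cell_test_fun s f j)" using cell_test_fun_C1(1)[OF df cf'] by blast
  then have "C1_fun v" unfolding v_def by (rule C1_fun_lincomb(1))
  note cv = C1_fun_continuous[OF this]
  note on_cell = cell_test_lincomb_on_translate[OF s df cf', where c = c and k = k, folded v_def]
  have cf2: "continuous_on UNIV (\<lambda>t. (f t)\<^sup>2)" "continuous_on UNIV (\<lambda>t. (f' t)\<^sup>2)"
    using has_real_derivative_imp_continuous_on[OF df] cf' by (auto intro!: continuous_intros)
  have "continuous_on UNIV (\<lambda>p. (partial_x v p)\<^sup>2 + (partial_y v p)\<^sup>2)"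
    using cv by (auto intro!: continuous_intros)
  then have "dirichlet (S_union A k) v
      = (\<Sum>i<k. integral (cbox (0, 0) (s, s))
          (\<lambda>p. (partial_x v (p + (2 * real i * s, 0)))\<^sup>2 + (partial_y v (p + (2 * real i * s, 0)))\<^sup>2))"
    using A k by (simp add: dirichlet_eq_partials integral_S_union integral_sq_cell s_def)
  also have "\<dots> = (\<Sum>i<k. (c i)\<^sup>2 * (2 * integral {0..s} (\<lambda>t. (f' t)\<^sup>2) * integral {0..s} (\<lambda>t. (f t)\<^sup>2)))"
  proof (rule sum.cong[OF refl])
    fix i assume "i \<in> {..<k}"
    then have "integral (cbox (0, 0) (s, s))
        (\<lambda>p. (partial_x v (p + (2 * real i * s, 0)))\<^sup>2 + (partial_y v (p + (2 * real i * s, 0)))\<^sup>2)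
      = integral (cbox (0, 0) (s, s)) (\<lambda>p. (c i)\<^sup>2 * ((f' (fst p))\<^sup>2 * (f (snd p))\<^sup>2)
          + (c i)\<^sup>2 * ((f (fst p))\<^sup>2 * (f' (snd p))\<^sup>2))"
      using on_cell(2,3) by (intro integral_cong) (simp add: power_mult_distrib)
    also have "\<dots> = (c i)\<^sup>2 * (integral {0..s} (\<lambda>t. (f' t)\<^sup>2) * integral {0..s} (\<lambda>t. (f t)\<^sup>2))
        + (c i)\<^sup>2 * (integral {0..s} (\<lambda>t. (f t)\<^sup>2) * integral {0..s} (\<lambda>t. (f' t)\<^sup>2))"
    proof -
      have "(\<lambda>p::pt. (c i)\<^sup>2 * ((f' (fst p))\<^sup>2 * (f (snd p))\<^sup>2)) integrable_on cbox (0, 0) (s, s)"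
        "(\<lambda>p::pt. (c i)\<^sup>2 * ((f (fst p))\<^sup>2 * (f' (snd p))\<^sup>2)) integrable_on cbox (0, 0) (s, s)"
        by (intro integrable_if_continuous_on_UNIV continuous_intros continuous_on_UNIV_comp[OF cf2(1)]
            continuous_on_UNIV_comp[OF cf2(2)])+
      then show ?thesis
        by (simp only: integral_add integral_mult_right integral_separable[OF cf2(2) cf2(1)]
            integral_separable[OF cf2(1) cf2(2)])
    qed
    finally show "integral (cbox (0, 0) (s, s))
        (\<lambda>p. (partial_x v (p + (2 * real i * s, 0)))\<^sup>2 + (partial_y v (p + (2 * real i * s, 0)))\<^sup>2)
      = (c i)\<^sup>2 * (2 * integral {0..s} (\<lambda>t. (f' t)\<^sup>2) * integral {0..s} (\<lambda>t. (f t)\<^sup>2))"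
      by (simp add: algebra_simps)
  qed
  finally show ?thesis unfolding v_def by (simp add: sum_distrib_right)
qed

lemma S_bint_cell_test_lincomb:
  assumes A: "A > 0" and k: "k \<ge> 1"
    and df: "\<And>t. (f has_real_derivative f' t) (at t)" and cf': "continuous_on UNIV f'"
  defines "s \<equiv> sq_side A k"
  shows "S_bint A k (\<lambda>x. (\<Sum>j<k. c j * cell_test_fun s f j x)\<^sup>2)
           = (\<Sum>i<k. (c i)\<^sup>2) * (2 * ((f 0)\<^sup>2 + (f s)\<^sup>2) * integral {0..s} (\<lambda>t. (f t)\<^sup>2))"
proof -
  define v where "v = (\<lambda>x. \<Sum>j<k. c j * cell_test_fun s f j x)"
  have s: "s > 0" unfolding s_def using sq_side_pos[OF A k] .
  note on_cell = cell_test_lincomb_on_translate(1)[OF s df cf', where c = c and k = k]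
  have "S_bint A k (\<lambda>x. (v x)\<^sup>2) = (\<Sum>i<k. (c i)\<^sup>2 * (2 * ((f 0)\<^sup>2 + (f s)\<^sup>2) * integral {0..s} (\<lambda>t. (f t)\<^sup>2)))"
    unfolding S_bint_def Let_def s_def[symmetric]
  proof (rule sum.cong[OF refl])
    fix i assume i: "i \<in> {..<k}"
    let ?a = "2 * real i * s"
    have v_edge: "v (?a + x, y) = c i * (f x * f y)" if "x \<in> {0..s}" "y \<in> {0..s}" for x y
      using on_cell[of i "(x, y)"] i that by (simp add: cbox_Pair_iff add.commute v_def)
    have "integral {0..s} (\<lambda>t. (v (?a + t, 0))\<^sup>2 + (v (?a + t, s))\<^sup>2 + (v (?a, t))\<^sup>2 + (v (?a + s, t))\<^sup>2)
        = integral {0..s} (\<lambda>t. ((c i)\<^sup>2 * (2 * ((f 0)\<^sup>2 + (f s)\<^sup>2))) * (f t)\<^sup>2)"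
    proof (rule integral_cong)
      fix t assume t: "t \<in> {0..s}"
      have "0 \<in> {0..s}" "s \<in> {0..s}" using s by auto
      with t v_edge[of t 0] v_edge[of t s] v_edge[of 0 t] v_edge[of s t]
      show "(v (?a + t, 0))\<^sup>2 + (v (?a + t, s))\<^sup>2 + (v (?a, t))\<^sup>2 + (v (?a + s, t))\<^sup>2
            = ((c i)\<^sup>2 * (2 * ((f 0)\<^sup>2 + (f s)\<^sup>2))) * (f t)\<^sup>2"
        by (simp add: power_mult_distrib algebra_simps)
    qed
    then show "integral {0..s} (\<lambda>t. (v (?a + t, 0))\<^sup>2 + (v (?a + t, s))\<^sup>2 + (v (?a, t))\<^sup>2 + (v (?a + s, t))\<^sup>2)
        = (c i)\<^sup>2 * (2 * ((f 0)\<^sup>2 + (f s)\<^sup>2) * integral {0..s} (\<lambda>t. (f t)\<^sup>2))"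
      by simp
  qed
  then show ?thesis unfolding v_def by (simp add: sum_distrib_right)
qed

lemma robin_energy_S_cell_test_lincomb:
  assumes A: "A > 0" and k: "k \<ge> 1"
    and df: "\<And>t. (f has_real_derivative f' t) (at t)" and cf': "continuous_on UNIV f'"
  defines "s \<equiv> sq_side A k"
  shows "robin_energy (S_union A k) (S_bint A k) \<alpha> (\<lambda>x. \<Sum>j<k. c j * cell_test_fun s f j x)
           = (\<Sum>i<k. (c i)\<^sup>2) * (2 * integral {0..s} (\<lambda>t. (f t)\<^sup>2) *
               (integral {0..s} (\<lambda>t. (f' t)\<^sup>2) + \<alpha> * ((f 0)\<^sup>2 + (f s)\<^sup>2)))"
  unfolding robin_energy_def s_def dirichlet_S_cell_test_lincomb[OF assms(1-4)]
    S_bint_cell_test_lincomb[OF assms(1-4)]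
  by (simp add: algebra_simps)

lemma robin_quotients_S_cell_test:
  assumes A: "A > 0" and k: "k \<ge> 1"
    and df: "\<And>t. (f has_real_derivative f' t) (at t)" and cf': "continuous_on UNIV f'"
  defines "s \<equiv> sq_side A k"
  assumes I0: "integral {0..s} (\<lambda>t. (f t)\<^sup>2) > 0"
  shows "minmax_admissible (S_union A k) k (cell_test_fun s f)"
    and "r \<in> robin_quotients (S_union A k) (S_bint A k) \<alpha> k (cell_test_fun s f) \<Longrightarrow>
           r = 2 * (integral {0..s} (\<lambda>t. (f' t)\<^sup>2) + \<alpha> * ((f 0)\<^sup>2 + (f s)\<^sup>2))
                 / integral {0..s} (\<lambda>t. (f t)\<^sup>2)"
proof -
  note L2 = integral_S_cell_test_lincomb[OF A k df cf', folded s_def]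
  note energy = robin_energy_S_cell_test_lincomb[OF A k df cf', folded s_def]
  show "minmax_admissible (S_union A k) k (cell_test_fun s f)"
    unfolding minmax_admissible_def L2 using cell_test_fun_C1(1)[OF df cf'] I0 sum_power2_pos by force
  assume "r \<in> robin_quotients (S_union A k) (S_bint A k) \<alpha> k (cell_test_fun s f)"
  then obtain c where c: "\<exists>i<k. c i \<noteq> 0"
    and r: "r = robin_rayleigh (S_union A k) (S_bint A k) \<alpha> (\<lambda>x. \<Sum>i<k. c i * cell_test_fun s f i x)"
    unfolding robin_quotients_def by blast
  show "r = 2 * (integral {0..s} (\<lambda>t. (f' t)\<^sup>2) + \<alpha> * ((f 0)\<^sup>2 + (f s)\<^sup>2))
              / integral {0..s} (\<lambda>t. (f t)\<^sup>2)"
    unfolding r robin_rayleigh_eq L2 energy using sum_power2_pos[OF c] I0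
    by (simp add: field_simps power2_eq_square)
qed

lemma robin_quotients_S_upper:
  assumes A: "A > 0" and k: "k \<ge> 1" and \<alpha>: "\<alpha> > 0"
  shows "\<exists>u. minmax_admissible (S_union A k) k u \<and>
           (\<forall>r \<in> robin_quotients (S_union A k) (S_bint A k) \<alpha> k u.
              r \<le> 2 * robin_interval_upper (sq_side A k) \<alpha>)"
proof -
  define s where "s = sq_side A k"
  have s: "s > 0" unfolding s_def using sq_side_pos[OF A k] .
  obtain f f' where df: "\<And>t. (f has_real_derivative f' t) (at t)" and cf': "continuous_on UNIV f'"
    and I0: "integral {0..s} (\<lambda>t. (f t)\<^sup>2) > 0"
    and rayleigh: "integral {0..s} (\<lambda>t. (f' t)\<^sup>2) + \<alpha> * ((f 0)\<^sup>2 + (f s)\<^sup>2)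
                     = robin_interval_upper s \<alpha> * integral {0..s} (\<lambda>t. (f t)\<^sup>2)"
    using robin_interval_upper_test_function[OF s \<alpha>] by blast
  note quot = robin_quotients_S_cell_test[OF A k df cf', folded s_def, OF I0]
  have "r \<le> 2 * robin_interval_upper (sq_side A k) \<alpha>"
    if "r \<in> robin_quotients (S_union A k) (S_bint A k) \<alpha> k (cell_test_fun s f)" for r
  proof -
    from that have "r = 2 * (integral {0..s} (\<lambda>t. (f' t)\<^sup>2) + \<alpha> * ((f 0)\<^sup>2 + (f s)\<^sup>2))
                  / integral {0..s} (\<lambda>t. (f t)\<^sup>2)"
      by (rule quot(2))
    also have "\<dots> = 2 * robin_interval_upper s \<alpha>" unfolding rayleigh using I0 by simp
    finally show ?thesis unfolding s_def by simp
  qed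
  with quot(1) show ?thesis by blast
qed

lemma robin_interval_lower_sq_side_eq:
  assumes A: "A > 0" and k: "k \<ge> 1"
  shows "4 * \<alpha> * pi\<^sup>2 * real k / (sqrt A * (pi\<^sup>2 * sqrt (real k) + 2 * \<alpha> * sqrt A))
         = 2 * robin_interval_lower (sq_side A k) \<alpha>"
proof -
  define rk where "rk = sqrt (real k)"
  have rk: "rk > 0" "real k = rk\<^sup>2" using k unfolding rk_def by auto
  have side: "sq_side A k = sqrt A / rk" unfolding sq_side_def rk_def by (simp add: real_sqrt_divide)
  show ?thesis unfolding robin_interval_lower_def side rk_def[symmetric] rk(2)
    using rk(1) A by (simp add: field_simps power2_eq_square)
qed

lemma robin_interval_upper_sq_side_eq:
  assumes A: "A > 0" and k: "k \<ge> 1"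
  shows "pi\<^sup>2 * sqrt (real k) / ((pi\<^sup>2 - 8) * A) *
           (pi\<^sup>2 * sqrt (real k) + 2 * \<alpha> * sqrt A
            - sqrt (64 * \<alpha> * sqrt (real k) * sqrt A + (pi\<^sup>2 * sqrt (real k) - 2 * \<alpha> * sqrt A)\<^sup>2))
         = 2 * robin_interval_upper (sq_side A k) \<alpha>"
proof -
  define rk where "rk = sqrt (real k)"
  define s where "s = sq_side A k"
  define Z where "Z = (pi\<^sup>2 - 2 * \<alpha> * s)\<^sup>2 + 64 * \<alpha> * s"
  have rk: "rk > 0" using k unfolding rk_def by auto
  have s: "s > 0" unfolding s_def using sq_side_pos[OF A k] .
  have sqrtA: "sqrt A = rk * s" unfolding s_def sq_side_def rk_def using k by (simp add: real_sqrt_divide)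
  then have A_eq: "A = rk\<^sup>2 * s\<^sup>2" using A by (metis power_mult_distrib real_sqrt_pow2 less_imp_le)
  have "64 * \<alpha> * rk * (rk * s) + (pi\<^sup>2 * rk - 2 * \<alpha> * (rk * s))\<^sup>2 = rk\<^sup>2 * Z"
    unfolding Z_def by (simp add: power2_eq_square algebra_simps)
  then have "sqrt (64 * \<alpha> * rk * (rk * s) + (pi\<^sup>2 * rk - 2 * \<alpha> * (rk * s))\<^sup>2) = rk * sqrt Z"
    using rk by (simp add: real_sqrt_mult)
  then show ?thesis
    unfolding rk_def[symmetric] sqrtA robin_interval_upper_def s_def[symmetric] Z_def[symmetric]
    using rk s pi_squared_gt_8 by (subst A_eq) (simp add: field_simps power2_eq_square)
qed

theorem propositionA3:
  fixes A \<alpha> :: real and k :: nat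
  assumes "A > 0" and "\<alpha> > 0" and "k \<ge> 1"
  shows "4 * \<alpha> * pi\<^sup>2 * real k / (sqrt A * (pi\<^sup>2 * sqrt (real k) + 2 * \<alpha> * sqrt A))
           \<le> robin_eig_S A k \<alpha> k \<and>
         robin_eig_S A k \<alpha> k
           \<le> pi\<^sup>2 * sqrt (real k) / ((pi\<^sup>2 - 8) * A) *
             (pi\<^sup>2 * sqrt (real k) + 2 * \<alpha> * sqrt A
              - sqrt (64 * \<alpha> * sqrt (real k) * sqrt A + (pi\<^sup>2 * sqrt (real k) - 2 * \<alpha> * sqrt A)\<^sup>2))"
proof -
  obtain u where "minmax_admissible (S_union A k) k u"
    and "\<forall>r \<in> robin_quotients (S_union A k) (S_bint A k) \<alpha> k u.
           r \<le> 2 * robin_interval_upper (sq_side A k) \<alpha>"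
    using robin_quotients_S_upper[OF assms(1,3,2)] by blast
  with bdd_above_robin_quotients_S[OF assms(1,3)] robin_quotients_S_lower[OF assms(1,3,2)] assms(3)
  have "2 * robin_interval_lower (sq_side A k) \<alpha> \<le> robin_eig_S A k \<alpha> k
      \<and> robin_eig_S A k \<alpha> k \<le> 2 * robin_interval_upper (sq_side A k) \<alpha>"
    unfolding robin_eig_S_def by (intro robin_eig_bounds) auto
  then show ?thesis
    unfolding robin_interval_lower_sq_side_eq[OF assms(1,3)]
      robin_interval_upper_sq_side_eq[OF assms(1,3)] .
qed

end
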